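(* Let $(k,|\cdot|)$ be a complete non-Archimedean field of characteristic $p>0$ with nontrivial value group. Then for every $n>0$ the Tate algebra $T_n(k)$ is Frobenius split in each of the following cases: (i) $(k,|\cdot|)$ is spherically complete; (ii) $k^{1/p}$ has a dense $k$-subspace $V$ having a countable $k$-basis (in particular if $[k^{1/p}:k]<\infty$); (iii) $|k^\times|$ is not discrete and the norm on $k^{1/p}$ is polar.
   Context: A non-Archimedean field is a field with a multiplicative absolute value satisfying the ultrametric inequality, assumed complete with nontrivial value group $|k^\times|$. $T_n(k)$ is the subring of $k[[X_1,\dots,X_n]]$ of series $\sum_\nu a_\nu X^\nu$ with $|a_\nu|\to0$ as $|\nu|\to\infty$. A ring $R$ of characteristic $p$ is Frobenius split if there is an $R$-linear map $\phi\colon F_{R*}R\to R$ with $\phi(1)=1$, where $F_{R*}R$ is $R$ with module structure $r\cdot x=r^px$. $k$ is spherically complete if every decreasing sequence of closed disks $D_1\supseteq D_2\supseteq\cdots$ in $k$ has nonempty intersection. $k^{1/p}$ carries the unique absolute value extending that of $k$ and is a normed $k$-vector space. A norm $\|\cdot\|$ on a normed $k$-space $E$ is polar if for every $x\in E$ with $\|x\|>1$ there is a $k$-linear functional $f\colon E\to k$ with $|f(y)|\le1$ for all $y$ with $\|y\|\le1$ and $|f(x)|>1$. *)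

theory Defs
  imports Complex_Main "HOL-Library.Countable_Set" "HOL-Algebra.Ring"
begin

definition nonarch_abs :: "('k::field \<Rightarrow> real) \<Rightarrow> bool" where
  "nonarch_abs av \<longleftrightarrow>
     (\<forall>x. av x \<ge> 0) \<and> (\<forall>x. av x = 0 \<longleftrightarrow> x = 0) \<and>
     (\<forall>x y. av (x * y) = av x * av y) \<and>
     (\<forall>x y. av (x + y) \<le> max (av x) (av y))"

definition av_complete :: "('k::field \<Rightarrow> real) \<Rightarrow> bool" where
  "av_complete av \<longleftrightarrow>
     (\<forall>s :: nat \<Rightarrow> 'k.
        (\<forall>e>0. \<exists>N. \<forall>m\<ge>N. \<forall>n\<ge>N. av (s m - s n) < e) \<longrightarrow>
        (\<exists>L. \<forall>e>0. \<exists>N. \<forall>n\<ge>N. av (s n - L) < e))"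

definition nontrivial_value_group :: "('k::field \<Rightarrow> real) \<Rightarrow> bool" where
  "nontrivial_value_group av \<longleftrightarrow> (\<exists>x. x \<noteq> 0 \<and> av x \<noteq> 1)"

definition discrete_value_group :: "('k::field \<Rightarrow> real) \<Rightarrow> bool" where
  "discrete_value_group av \<longleftrightarrow>
     (\<exists>e>0. \<forall>x. x \<noteq> 0 \<and> av x \<noteq> 1 \<longrightarrow> \<bar>av x - 1\<bar> \<ge> e)"

definition closed_disk :: "('k::field \<Rightarrow> real) \<Rightarrow> 'k \<Rightarrow> real \<Rightarrow> 'k set" where
  "closed_disk av c r = {x. av (x - c) \<le> r}"

definition spherically_complete :: "('k::field \<Rightarrow> real) \<Rightarrow> bool" where
  "spherically_complete av \<longleftrightarrow>
     (\<forall>(c :: nat \<Rightarrow> 'k) (r :: nat \<Rightarrow> real).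
        (\<forall>n. r n \<ge> 0) \<and>
        (\<forall>n. closed_disk av (c (Suc n)) (r (Suc n)) \<subseteq> closed_disk av (c n) (r n)) \<longrightarrow>
        (\<Inter>n. closed_disk av (c n) (r n)) \<noteq> {})"

text \<open>k^(1/p) is modelled via the Frobenius isomorphism k^(1/p) -> k, x |-> x^p:
  its underlying additive group is (k,+), an element y of k stands for y^(1/p),
  the scalar action of c in k is  c . y = c^p * y  (since (c y^(1/p))^p = c^p y),
  and the (unique extended) absolute value is  ||y|| = av y powr (1/p).\<close>
definition rootp_smult :: "nat \<Rightarrow> 'k::field \<Rightarrow> 'k \<Rightarrow> 'k" where
  "rootp_smult p c y = c ^ p * y"

definition rootp_norm :: "('k::field \<Rightarrow> real) \<Rightarrow> nat \<Rightarrow> 'k \<Rightarrow> real" where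
  "rootp_norm av p y = av y powr (1 / real p)"

definition rootp_subspace :: "nat \<Rightarrow> 'k::field set \<Rightarrow> bool" where
  "rootp_subspace p V \<longleftrightarrow> 0 \<in> V \<and> (\<forall>x\<in>V. \<forall>y\<in>V. x + y \<in> V) \<and>
     (\<forall>c. \<forall>x\<in>V. rootp_smult p c x \<in> V)"

definition rootp_lin_indep :: "nat \<Rightarrow> 'k::field set \<Rightarrow> bool" where
  "rootp_lin_indep p B \<longleftrightarrow>
     (\<forall>F a. finite F \<and> F \<subseteq> B \<and> (\<Sum>b\<in>F. rootp_smult p (a b) b) = 0 \<longrightarrow> (\<forall>b\<in>F. a b = 0))"

definition rootp_span :: "nat \<Rightarrow> 'k::field set \<Rightarrow> 'k set" where
  "rootp_span p B = {\<Sum>b\<in>F. rootp_smult p (a b) b | F a. finite F \<and> F \<subseteq> B}"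

definition rootp_dense :: "('k::field \<Rightarrow> real) \<Rightarrow> nat \<Rightarrow> 'k set \<Rightarrow> bool" where
  "rootp_dense av p V \<longleftrightarrow> (\<forall>y. \<forall>e>0. \<exists>v\<in>V. rootp_norm av p (y - v) < e)"

definition rootp_dense_countable_basis :: "('k::field \<Rightarrow> real) \<Rightarrow> nat \<Rightarrow> bool" where
  "rootp_dense_countable_basis av p \<longleftrightarrow>
     (\<exists>V B. rootp_subspace p V \<and> rootp_dense av p V \<and>
            countable B \<and> B \<subseteq> V \<and> rootp_lin_indep p B \<and> rootp_span p B = V)"

definition rootp_linear_functional :: "nat \<Rightarrow> ('k::field \<Rightarrow> 'k) \<Rightarrow> bool" where
  "rootp_linear_functional p f \<longleftrightarrow>
     (\<forall>x y. f (x + y) = f x + f y) \<and> (\<forall>c x. f (rootp_smult p c x) = c * f x)"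

definition rootp_polar :: "('k::field \<Rightarrow> real) \<Rightarrow> nat \<Rightarrow> bool" where
  "rootp_polar av p \<longleftrightarrow>
     (\<forall>x. rootp_norm av p x > 1 \<longrightarrow>
        (\<exists>f. rootp_linear_functional p f \<and>
             (\<forall>y. rootp_norm av p y \<le> 1 \<longrightarrow> av (f y) \<le> 1) \<and> av (f x) > 1))"

text \<open>A formal power series is a coefficient function (nat => nat) => 'k vanishing off
  the n-multi-indices.  T_n(k) consists of those with coefficients tending to 0,
  i.e. for each e > 0 only finitely many coefficients have absolute value >= e.\<close>
definition multi_index :: "nat \<Rightarrow> (nat \<Rightarrow> nat) \<Rightarrow> bool" where
  "multi_index n \<nu> \<longleftrightarrow> (\<forall>i\<ge>n. \<nu> i = 0)"

definition tate_carrier :: "('k::field \<Rightarrow> real) \<Rightarrow> nat \<Rightarrow> ((nat \<Rightarrow> nat) \<Rightarrow> 'k) set" where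
  "tate_carrier av n = {f. (\<forall>\<nu>. \<not> multi_index n \<nu> \<longrightarrow> f \<nu> = 0) \<and>
                          (\<forall>e>0. finite {\<nu>. av (f \<nu>) \<ge> e})}"

definition ps_mult :: "((nat \<Rightarrow> nat) \<Rightarrow> 'k::field) \<Rightarrow> ((nat \<Rightarrow> nat) \<Rightarrow> 'k) \<Rightarrow> (nat \<Rightarrow> nat) \<Rightarrow> 'k" where
  "ps_mult f g \<nu> = (\<Sum>\<mu>\<in>{\<mu>. \<forall>i. \<mu> i \<le> \<nu> i}. f \<mu> * g (\<lambda>i. \<nu> i - \<mu> i))"

definition ps_one :: "(nat \<Rightarrow> nat) \<Rightarrow> 'k::field" where
  "ps_one \<nu> = (if \<nu> = (\<lambda>_. 0) then 1 else 0)"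

definition tate_algebra :: "('k::field \<Rightarrow> real) \<Rightarrow> nat \<Rightarrow> ((nat \<Rightarrow> nat) \<Rightarrow> 'k) ring" where
  "tate_algebra av n =
     \<lparr>carrier = tate_carrier av n, monoid.mult = ps_mult, one = ps_one,
      zero = (\<lambda>_. 0), add = (\<lambda>f g \<nu>. f \<nu> + g \<nu>)\<rparr>"

text \<open>R (of characteristic p) is Frobenius split if there is an R-linear map
  phi : F_* R -> R with phi 1 = 1, where r . x = r^p x on F_* R.\<close>
definition frobenius_split :: "('a, 'b) ring_scheme \<Rightarrow> nat \<Rightarrow> bool" where
  "frobenius_split R p \<longleftrightarrow>
     (\<exists>\<phi> \<in> carrier R \<rightarrow> carrier R.
        (\<forall>x\<in>carrier R. \<forall>y\<in>carrier R. \<phi> (x \<oplus>\<^bsub>R\<^esub> y) = \<phi> x \<oplus>\<^bsub>R\<^esub> \<phi> y) \<and>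
        (\<forall>r\<in>carrier R. \<forall>x\<in>carrier R.
            \<phi> ((r [^]\<^bsub>R\<^esub> p) \<otimes>\<^bsub>R\<^esub> x) = r \<otimes>\<^bsub>R\<^esub> \<phi> x) \<and>
        \<phi> \<one>\<^bsub>R\<^esub> = \<one>\<^bsub>R\<^esub>)"

end

(*
  A bounded k-linear retraction \<theta> : k^(1/p) \<rightarrow> k gives the Frobenius splitting
  \<Sum> a\<^sub>\<nu> X^\<nu> \<mapsto> \<Sum> \<theta>(a\<^sub>p\<^sub>\<nu>) X^\<nu> of T\<^sub>n(k); the bound on \<theta> keeps coefficients tending to 0.
  Such a \<theta> is the projection along any subspace H with k + H = k^(1/p) that is orthogonal
  to k up to a constant, i.e. D \<parallel>c\<parallel> \<le> \<parallel>c + h\<parallel>.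
  (i) If k is spherically complete, a maximal 1-orthogonal H (Zorn) is such a complement: every
      y has a best approximation a by k modulo H, and y - a could otherwise be adjoined to H.
  (ii) If k^(1/p) has a dense subspace with countable basis b\<^sub>0, b\<^sub>1, ..., adjoin almost
      orthogonal directions one at a time, keeping k + H\<^sub>m closed and losing little
      orthogonality each step; the closure of \<Union> H\<^sub>m is a complement by completeness.
  (iii) If the norm is polar, a functional separating c\<^sup>p (|c| > 1) from the unit ball, divided
      by its value at 1, is already a bounded retraction.
*)

theory Submission
  imports Defs "HOL-Computational_Algebra.Primes"
begin

section \<open>Power series with finitely supported exponents\<close>

definition finite_supp :: "(nat \<Rightarrow> nat) \<Rightarrow> bool" where
  "finite_supp \<nu> \<longleftrightarrow> finite {i. \<nu> i \<noteq> 0}"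

definition below :: "(nat \<Rightarrow> nat) \<Rightarrow> (nat \<Rightarrow> nat) set" where
  "below \<nu> = {\<mu>. \<forall>i. \<mu> i \<le> \<nu> i}"

lemma finite_below:
  assumes "finite_supp \<nu>"
  shows "finite (below \<nu>)"
proof -
  obtain N where "{i. \<nu> i \<noteq> 0} \<subseteq> {..<N}"
    using assms finite_nat_bounded unfolding finite_supp_def by blast
  then have N: "\<nu> i = 0" if "\<not> i < N" for i using that by auto
  let ?ext = "\<lambda>f i. if i < N then f i else (0::nat)"
  have "below \<nu> \<subseteq> ?ext ` PiE {..<N} (\<lambda>i. {..\<nu> i})"
  proof
    fix \<mu> assume "\<mu> \<in> below \<nu>"
    then have le: "\<And>i. \<mu> i \<le> \<nu> i" by (simp add: below_def)
    moreover have "\<mu> i = 0" if "\<not> i < N" for i using le[of i] N[OF that] by simp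
    ultimately have "\<mu> = ?ext (restrict \<mu> {..<N})" by auto
    moreover have "restrict \<mu> {..<N} \<in> PiE {..<N} (\<lambda>i. {..\<nu> i})" using le by simp
    ultimately show "\<mu> \<in> ?ext ` PiE {..<N} (\<lambda>i. {..\<nu> i})" by (rule image_eqI)
  qed
  then show ?thesis by (rule finite_subset) (simp add: finite_PiE)
qed

lemma infinite_below:
  assumes "\<not> finite_supp \<nu>"
  shows "infinite (below \<nu>)"
proof
  let ?single = "\<lambda>i j. if j = i then \<nu> i else 0"
  assume "finite (below \<nu>)"
  moreover have "?single ` {i. \<nu> i \<noteq> 0} \<subseteq> below \<nu>" by (auto simp: below_def)
  ultimately have "finite (?single ` {i. \<nu> i \<noteq> 0})" by (rule finite_subset[rotated])
  moreover have "inj_on ?single {i. \<nu> i \<noteq> 0}"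
    by (rule inj_onI) (drule fun_cong, auto split: if_splits)
  ultimately have "finite {i. \<nu> i \<noteq> 0}" by (rule finite_imageD)
  then show False using assms by (simp add: finite_supp_def)
qed

lemma finite_supp_zero [simp]: "finite_supp (\<lambda>_. 0)"
  by (simp add: finite_supp_def)

lemma finite_supp_add: "finite_supp \<alpha> \<Longrightarrow> finite_supp \<beta> \<Longrightarrow> finite_supp (\<lambda>i. \<alpha> i + \<beta> i)"
  unfolding finite_supp_def by (rule finite_subset[of _ "{i. \<alpha> i \<noteq> 0} \<union> {i. \<beta> i \<noteq> 0}"]) auto

lemma finite_supp_mult: "finite_supp \<alpha> \<Longrightarrow> finite_supp (\<lambda>i. m * \<alpha> i)"
  unfolding finite_supp_def by (rule finite_subset[of _ "{i. \<alpha> i \<noteq> 0}"]) auto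

lemma finite_supp_below: "finite_supp \<nu> \<Longrightarrow> \<mu> \<in> below \<nu> \<Longrightarrow> finite_supp \<mu>"
  unfolding finite_supp_def below_def by (erule finite_subset[rotated]) (auto, metis le_zero_eq neq0_conv)

lemma finite_supp_multi_index: "multi_index n \<nu> \<Longrightarrow> finite_supp \<nu>"
  unfolding multi_index_def finite_supp_def by (rule finite_subset[of _ "{..<n}"]) (auto simp: not_less[symmetric])

lemma below_refl [simp]: "\<nu> \<in> below \<nu>"
  and zero_in_below [simp]: "(\<lambda>_. 0) \<in> below \<nu>"
  and diff_in_below [simp]: "(\<lambda>i. \<nu> i - \<mu> i) \<in> below \<nu>"
  by (simp_all add: below_def)

lemma below_trans: "\<nu>' \<in> below \<nu> \<Longrightarrow> \<mu> \<in> below \<nu>' \<Longrightarrow> \<mu> \<in> below \<nu>"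
  unfolding below_def using le_trans by blast

lemma diff_in_below_trans: "\<nu>' \<in> below \<nu> \<Longrightarrow> (\<lambda>i. \<nu>' i - \<mu> i) \<in> below \<nu>"
  using below_trans diff_in_below by blast

lemma diff_diff_below: "\<mu> \<in> below \<nu> \<Longrightarrow> (\<lambda>i. \<nu> i - (\<nu> i - \<mu> i)) = \<mu>"
  unfolding below_def by (rule ext) simp

lemma scale_eq_iff:
  fixes \<mu> \<nu> :: "nat \<Rightarrow> nat"
  assumes "p > 0"
  shows "\<nu> = (\<lambda>i. p * \<mu> i) \<longleftrightarrow> (\<forall>i. p dvd \<nu> i) \<and> \<mu> = (\<lambda>i. \<nu> i div p)"
  using assms by (auto simp: fun_eq_iff)

lemma ps_mult_below: "ps_mult f g \<nu> = (\<Sum>\<mu>\<in>below \<nu>. f \<mu> * g (\<lambda>i. \<nu> i - \<mu> i))"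
  by (simp add: ps_mult_def below_def)

text \<open>For an exponent of infinite support the sum defining \<open>ps_mult\<close> is infinite and
  hence \<open>0\<close> by convention; such exponents never occur in the Tate algebra.\<close>

lemma ps_mult_not_finite_supp: "\<not> finite_supp \<nu> \<Longrightarrow> ps_mult f g \<nu> = 0"
  using infinite_below by (simp add: ps_mult_below)

lemma ps_one_not_finite_supp: "\<not> finite_supp \<nu> \<Longrightarrow> ps_one \<nu> = 0"
  by (auto simp: ps_one_def)

lemma ps_mult_commute: "ps_mult f g \<nu> = ps_mult g f \<nu>"
proof (cases "finite_supp \<nu>")
  case True
  show ?thesis unfolding ps_mult_below
    by (rule sum.reindex_bij_witness[where i="\<lambda>\<mu> i. \<nu> i - \<mu> i" and j="\<lambda>\<mu> i. \<nu> i - \<mu> i"])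
      (simp_all add: diff_diff_below mult.commute)
qed (simp add: ps_mult_not_finite_supp)

lemma ps_mult_assoc: "ps_mult (ps_mult f g) h \<nu> = ps_mult f (ps_mult g h) \<nu>"
proof (cases "finite_supp \<nu>")
  case True
  let ?F = "\<lambda>\<alpha> \<beta>. f \<alpha> * (g \<beta> * h (\<lambda>i. \<nu> i - \<alpha> i - \<beta> i))"
  have fin: "finite (below \<nu>)" "\<And>\<mu>. \<mu> \<in> below \<nu> \<Longrightarrow> finite (below \<mu>)"
    using True finite_below finite_supp_below by blast+
  have "ps_mult (ps_mult f g) h \<nu>
      = (\<Sum>(\<mu>,\<alpha>)\<in>Sigma (below \<nu>) below. f \<alpha> * g (\<lambda>i. \<mu> i - \<alpha> i) * h (\<lambda>i. \<nu> i - \<mu> i))"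
    unfolding ps_mult_below sum_distrib_right by (rule sum.Sigma) (use fin in blast)+
  also have "\<dots> = (\<Sum>(\<alpha>,\<beta>)\<in>Sigma (below \<nu>) (\<lambda>\<alpha>. below (\<lambda>i. \<nu> i - \<alpha> i)). ?F \<alpha> \<beta>)"
    \<comment> \<open>substitute \<open>\<mu> = \<alpha> + \<beta>\<close>\<close>
    by (rule sum.reindex_bij_witness[where i="\<lambda>(\<alpha>,\<beta>). (\<lambda>i. \<alpha> i + \<beta> i, \<alpha>)"
          and j="\<lambda>(\<mu>,\<alpha>). (\<alpha>, \<lambda>i. \<mu> i - \<alpha> i)"])
       (auto simp: below_def fun_eq_iff mult.assoc diff_le_mono,
        meson le_trans, metis add.commute le_diff_conv2)
  also have "\<dots> = ps_mult f (ps_mult g h) \<nu>"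
    unfolding ps_mult_below sum_distrib_left
    by (rule sum.Sigma[symmetric]) (use fin diff_in_below in blast)+
  finally show ?thesis .
qed (simp add: ps_mult_not_finite_supp)

lemma ps_one_mult:
  assumes "finite_supp \<nu>"
  shows "ps_mult ps_one f \<nu> = f \<nu>"
proof -
  have "ps_mult ps_one f \<nu> = (\<Sum>\<mu>\<in>below \<nu>. if \<mu> = (\<lambda>_. 0) then f (\<lambda>i. \<nu> i - \<mu> i) else 0)"
    unfolding ps_mult_below ps_one_def by (rule sum.cong) auto
  also have "\<dots> = f \<nu>"
    using finite_below[OF assms] by (simp add: sum.delta)
  finally show ?thesis .
qed

text \<open>Series whose coefficients vanish off finitely supported exponents form a commutative
  ring; this type gives access to the freshman's dream for their \<open>p\<close>-th powers.\<close>

typedef (overloaded) 'k mpser =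
  "{f :: (nat \<Rightarrow> nat) \<Rightarrow> 'k::field. \<forall>\<nu>. \<not> finite_supp \<nu> \<longrightarrow> f \<nu> = 0}"
  by (rule exI[of _ "\<lambda>_. 0"]) simp

setup_lifting type_definition_mpser

instantiation mpser :: (field) comm_ring_1
begin

lift_definition zero_mpser :: "'a mpser" is "\<lambda>_. 0" by simp
lift_definition one_mpser :: "'a mpser" is ps_one by (simp add: ps_one_not_finite_supp)
lift_definition plus_mpser :: "'a mpser \<Rightarrow> 'a mpser \<Rightarrow> 'a mpser" is "\<lambda>f g \<nu>. f \<nu> + g \<nu>" by simp
lift_definition minus_mpser :: "'a mpser \<Rightarrow> 'a mpser \<Rightarrow> 'a mpser" is "\<lambda>f g \<nu>. f \<nu> - g \<nu>" by simp
lift_definition uminus_mpser :: "'a mpser \<Rightarrow> 'a mpser" is "\<lambda>f \<nu>. - f \<nu>" by simp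
lift_definition times_mpser :: "'a mpser \<Rightarrow> 'a mpser \<Rightarrow> 'a mpser" is ps_mult
  by (simp add: ps_mult_not_finite_supp)

instance
proof
  fix a b c :: "'a mpser"
  show "a * b * c = a * (b * c)" by transfer (simp add: ps_mult_assoc fun_eq_iff)
  show "a * b = b * a" by transfer (simp add: ps_mult_commute fun_eq_iff)
  show "1 * a = a"
  proof transfer
    fix a :: "(nat \<Rightarrow> nat) \<Rightarrow> 'a"
    assume "\<forall>\<nu>. \<not> finite_supp \<nu> \<longrightarrow> a \<nu> = 0"
    then show "ps_mult ps_one a = a"
      by (metis ps_one_mult ps_mult_not_finite_supp ext)
  qed
  show "(a + b) * c = a * c + b * c"
    by transfer (simp add: fun_eq_iff ps_mult_below sum.distrib distrib_right)
  show "a + b + c = a + (b + c)" by transfer (simp add: add.assoc)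
  show "a + b = b + a" by transfer (simp add: add.commute)
  show "0 + a = a" by transfer simp
  show "- a + a = 0" by transfer simp
  show "a - b = a + - b" by transfer simp
  show "(0::'a mpser) \<noteq> 1" by transfer (auto simp: fun_eq_iff ps_one_def)
qed

end

lemma Rep_mpser_not_finite_supp: "\<not> finite_supp \<nu> \<Longrightarrow> Rep_mpser x \<nu> = 0"
  using Rep_mpser by auto

lemma Rep_mpser_sum: "Rep_mpser (sum f A) \<nu> = (\<Sum>i\<in>A. Rep_mpser (f i) \<nu>)"
  by (induction A rule: infinite_finite_induct) (simp_all add: zero_mpser.rep_eq plus_mpser.rep_eq)

lift_definition mpmonom :: "'k::field \<Rightarrow> (nat \<Rightarrow> nat) \<Rightarrow> 'k mpser" is
  "\<lambda>c \<mu> \<nu>. if finite_supp \<mu> \<and> \<nu> = \<mu> then c else 0" by auto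

lemma mpmonom_add: "mpmonom a \<mu> + mpmonom b \<mu> = mpmonom (a + b) \<mu>"
  by transfer auto

lemma one_mpser_eq: "1 = mpmonom 1 (\<lambda>_. 0)"
  by transfer (auto simp: fun_eq_iff ps_one_def)

lemma of_nat_mpser: "of_nat m = mpmonom (of_nat m) (\<lambda>_. 0)"
proof (induction m)
  case 0
  show ?case by (simp add: Rep_mpser_inject[symmetric] zero_mpser.rep_eq mpmonom.rep_eq fun_eq_iff)
qed (simp add: one_mpser_eq mpmonom_add)

lemma CHAR_mpser [simp]: "CHAR('k::field mpser) = CHAR('k)"
proof (rule CHAR_eqI)
  show "of_nat CHAR('k) = (0::'k mpser)"
    unfolding of_nat_mpser
    by (simp add: Rep_mpser_inject[symmetric] zero_mpser.rep_eq mpmonom.rep_eq fun_eq_iff)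
next
  fix m assume "of_nat m = (0::'k mpser)"
  then have "Rep_mpser (of_nat m :: 'k mpser) (\<lambda>_. 0) = 0" by (simp add: zero_mpser.rep_eq)
  then have "(of_nat m :: 'k) = 0" unfolding of_nat_mpser by (simp add: mpmonom.rep_eq)
  then show "CHAR('k) dvd m" by (simp add: of_nat_eq_0_iff_char_dvd)
qed

lemma mpmonom_mult:
  assumes "finite_supp \<alpha>" "finite_supp \<beta>"
  shows "mpmonom a \<alpha> * mpmonom b \<beta> = mpmonom (a * b) (\<lambda>i. \<alpha> i + \<beta> i)"
proof (rule Rep_mpser_inject[THEN iffD1], rule ext)
  fix \<nu>
  have shift: "(\<alpha> \<in> below \<nu> \<and> (\<lambda>i. \<nu> i - \<alpha> i) = \<beta>) \<longleftrightarrow> \<nu> = (\<lambda>i. \<alpha> i + \<beta> i)"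
    by (auto simp: below_def fun_eq_iff) (metis add_diff_inverse_nat not_le)
  show "Rep_mpser (mpmonom a \<alpha> * mpmonom b \<beta>) \<nu> = Rep_mpser (mpmonom (a * b) (\<lambda>i. \<alpha> i + \<beta> i)) \<nu>"
  proof (cases "finite_supp \<nu>")
    case True
    have "Rep_mpser (mpmonom a \<alpha> * mpmonom b \<beta>) \<nu>
        = (\<Sum>\<mu>\<in>below \<nu>. if \<mu> = \<alpha> then (if (\<lambda>i. \<nu> i - \<alpha> i) = \<beta> then a * b else 0) else 0)"
      unfolding times_mpser.rep_eq ps_mult_below mpmonom.rep_eq using assms by (intro sum.cong) auto
    also have "\<dots> = (if \<alpha> \<in> below \<nu> then (if (\<lambda>i. \<nu> i - \<alpha> i) = \<beta> then a * b else 0) else 0)"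
      using finite_below[OF True] by (simp add: sum.delta)
    also have "\<dots> = (if \<nu> = (\<lambda>i. \<alpha> i + \<beta> i) then a * b else 0)"
      using shift by auto
    finally show ?thesis using finite_supp_add[OF assms] by (simp add: mpmonom.rep_eq)
  qed (simp add: Rep_mpser_not_finite_supp)
qed

lemma mpmonom_power:
  assumes "finite_supp \<alpha>"
  shows "mpmonom a \<alpha> ^ m = mpmonom (a ^ m) (\<lambda>i. m * \<alpha> i)"
  by (induction m) (simp_all add: one_mpser_eq mpmonom_mult assms finite_supp_mult)

lemma coeff_power_below_eq:
  assumes "\<forall>\<mu>\<in>below \<nu>. Rep_mpser x \<mu> = Rep_mpser y \<mu>"
  shows "\<forall>\<nu>'\<in>below \<nu>. Rep_mpser (x ^ m) \<nu>' = Rep_mpser (y ^ m) \<nu>'"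
proof (induction m)
  case (Suc m)
  show ?case
  proof
    fix \<nu>' assume \<nu>': "\<nu>' \<in> below \<nu>"
    show "Rep_mpser (x ^ Suc m) \<nu>' = Rep_mpser (y ^ Suc m) \<nu>'"
      unfolding power_Suc times_mpser.rep_eq ps_mult_below
    proof (rule sum.cong[OF refl])
      fix \<mu> assume "\<mu> \<in> below \<nu>'"
      then have "\<mu> \<in> below \<nu>" "(\<lambda>i. \<nu>' i - \<mu> i) \<in> below \<nu>"
        using \<nu>' below_trans diff_in_below_trans by blast+
      then show "Rep_mpser x \<mu> * Rep_mpser (x ^ m) (\<lambda>i. \<nu>' i - \<mu> i)
               = Rep_mpser y \<mu> * Rep_mpser (y ^ m) (\<lambda>i. \<nu>' i - \<mu> i)"
        using assms Suc by simp
    qed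
  qed
qed simp

text \<open>Coefficients of \<open>x\<^sup>p\<close> at and below \<open>\<nu>\<close> only depend on the finitely many coefficients
  of \<open>x\<close> below \<open>\<nu>\<close>, so the freshman's dream may be applied to the truncation.\<close>

lemma coeff_power_CHAR:
  assumes "CHAR('k::field) = p" "p > 0"
  shows "Rep_mpser ((x::'k mpser) ^ p) \<nu> =
           (if \<forall>i. p dvd \<nu> i then Rep_mpser x (\<lambda>i. \<nu> i div p) ^ p else 0)"
proof (cases "finite_supp \<nu>")
  case True
  define t where "t = (\<Sum>\<mu>\<in>below \<nu>. mpmonom (Rep_mpser x \<mu>) \<mu>)"
  have "prime p" using assms prime_CHAR_semidom[where 'a='k] by simp
  have t_coeff: "Rep_mpser t \<nu>' = (if \<nu>' \<in> below \<nu> then Rep_mpser x \<nu>' else 0)" for \<nu>'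
  proof -
    have "Rep_mpser t \<nu>' = (\<Sum>\<mu>\<in>below \<nu>. if \<nu>' = \<mu> then Rep_mpser x \<mu> else 0)"
      unfolding t_def Rep_mpser_sum mpmonom.rep_eq
      by (rule sum.cong[OF refl]) (use finite_supp_below[OF True] in auto)
    then show ?thesis using finite_below[OF True] by (simp add: sum.delta')
  qed
  have "Rep_mpser (x ^ p) \<nu> = Rep_mpser (t ^ p) \<nu>"
    using coeff_power_below_eq[of \<nu> x t p] t_coeff by simp
  also have "t ^ p = (\<Sum>\<mu>\<in>below \<nu>. mpmonom (Rep_mpser x \<mu>) \<mu> ^ p)"
    unfolding t_def by (rule freshmans_dream_sum) (use assms \<open>prime p\<close> in simp_all)
  also have "\<dots> = (\<Sum>\<mu>\<in>below \<nu>. mpmonom (Rep_mpser x \<mu> ^ p) (\<lambda>i. p * \<mu> i))"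
    using finite_supp_below[OF True] by (simp add: mpmonom_power)
  also have "Rep_mpser \<dots> \<nu> = (\<Sum>\<mu>\<in>below \<nu>. if (\<forall>i. p dvd \<nu> i) \<and> \<mu> = (\<lambda>i. \<nu> i div p)
                                               then Rep_mpser x \<mu> ^ p else 0)"
    unfolding Rep_mpser_sum mpmonom.rep_eq scale_eq_iff[OF assms(2)]
    by (rule sum.cong[OF refl]) (use finite_supp_below[OF True] finite_supp_mult in auto)
  also have "\<dots> = (if \<forall>i. p dvd \<nu> i then Rep_mpser x (\<lambda>i. \<nu> i div p) ^ p else 0)"
  proof (cases "\<forall>i. p dvd \<nu> i")
    case False
    then show ?thesis by (simp del: not_all)
  qed (use finite_below[OF True] in \<open>simp add: sum.delta below_def\<close>)
  finally show ?thesis .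
next
  case False
  have "\<not> finite_supp (\<lambda>i. \<nu> i div p)" if "\<forall>i. p dvd \<nu> i"
    using False finite_supp_mult[of "\<lambda>i. \<nu> i div p" p] that by auto
  then show ?thesis using False assms(2) by (simp add: Rep_mpser_not_finite_supp)
qed

section \<open>Non-Archimedean fields of positive characteristic\<close>

locale nonarch_field =
  fixes av :: "'k::field \<Rightarrow> real" and p :: nat
  assumes nonarch: "nonarch_abs av" and CHAR_eq: "CHAR('k) = p" and p_pos: "p > 0"
begin

lemma av_nonneg [simp]: "av x \<ge> 0"
  and av_eq_0_iff [simp]: "av x = 0 \<longleftrightarrow> x = 0"
  and av_mult: "av (x * y) = av x * av y"
  and av_add_le: "av (x + y) \<le> max (av x) (av y)"
  using nonarch unfolding nonarch_abs_def by auto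

lemma av_0 [simp]: "av 0 = 0"
  by simp

lemma av_1 [simp]: "av 1 = 1"
  using av_mult[of 1 1] av_eq_0_iff[of 1] by simp

lemma av_power: "av (x ^ n) = av x ^ n"
  by (induction n) (simp_all add: av_mult)

lemma av_minus [simp]: "av (- x) = av x"
proof -
  have "(av (- 1) - 1) * (av (- 1) + 1) = 0"
    using av_mult[of "- 1" "- 1"] by (simp add: algebra_simps)
  moreover have "av (- 1) + 1 \<noteq> 0" using av_nonneg[of "- 1"] by linarith
  ultimately have "av (- 1) = 1" by simp
  then show ?thesis using av_mult[of "- 1" x] by simp
qed

lemma av_pos: "x \<noteq> 0 \<Longrightarrow> av x > 0"
  using av_nonneg[of x] av_eq_0_iff[of x] by linarith

lemma av_minus_commute: "av (x - y) = av (y - x)"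
  using av_minus[of "x - y"] by simp

lemma av_diff_le: "av (x - y) \<le> max (av x) (av y)"
  using av_add_le[of x "- y"] by simp

lemma av_diff_triangle: "av (x - y) \<le> max (av (x - z)) (av (z - y))"
  using av_add_le[of "x - z" "z - y"] by simp

lemma av_inverse: "av (inverse x) = inverse (av x)"
proof (cases "x = 0")
  case False
  then have "av x * av (inverse x) = 1" using av_mult[of x "inverse x"] by simp
  then show ?thesis by (simp add: inverse_unique)
qed simp

lemma av_power_int: "av (x powi k) = av x powi k"
  unfolding power_int_def by (simp add: av_power av_inverse power_inverse)

lemma prime_p: "prime p"
  using CHAR_eq p_pos prime_CHAR_semidom[where 'a='k] by simp

lemma frobenius_add: "(x + y :: 'k) ^ p = x ^ p + y ^ p"
  by (rule freshmans_dream) (use prime_p CHAR_eq in simp_all)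

lemma frobenius_minus: "(- x :: 'k) ^ p = - (x ^ p)"
  by (rule minus_power_prime_CHAR) (use prime_p CHAR_eq in simp_all)

lemma frobenius_diff: "(x - y :: 'k) ^ p = x ^ p - y ^ p"
  using frobenius_add[of x "- y"] frobenius_minus[of y] by simp

lemma power_p_le_imp_le: "(x::real) ^ p \<le> y ^ p \<Longrightarrow> 0 \<le> y \<Longrightarrow> x \<le> y"
  using power_le_imp_le_base[of x "p - 1" y] p_pos by simp

end

section \<open>Frobenius splittings of Tate algebras\<close>

text \<open>Under the model of \<open>k\<^sup>1\<^sup>/\<^sup>p\<close> in which \<open>y\<close> stands for \<open>y\<^sup>1\<^sup>/\<^sup>p\<close>, the subfield \<open>k\<close> is the
  set of \<open>p\<close>-th powers, and the following describes a bounded \<open>k\<close>-linear map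
  \<open>k\<^sup>1\<^sup>/\<^sup>p \<rightarrow> k\<close> that is the identity on \<open>k\<close>: by linearity \<open>\<theta> (c\<^sup>p) = c \<theta> 1 = c\<close>.\<close>

definition frobenius_retraction :: "('k::field \<Rightarrow> real) \<Rightarrow> nat \<Rightarrow> ('k \<Rightarrow> 'k) \<Rightarrow> bool" where
  "frobenius_retraction av p \<theta> \<longleftrightarrow>
     (\<forall>x y. \<theta> (x + y) = \<theta> x + \<theta> y) \<and> (\<forall>c y. \<theta> (c ^ p * y) = c * \<theta> y) \<and> \<theta> 1 = 1 \<and>
     (\<exists>C>0. \<forall>y. av (\<theta> y) ^ p \<le> C * av y)"

lemma frobenius_retraction_0:
  assumes "frobenius_retraction av p \<theta>"
  shows "\<theta> 0 = 0"
  using assms unfolding frobenius_retraction_def by (metis add_0 add_left_imp_eq add.right_neutral)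

lemma frobenius_retraction_sum:
  assumes "frobenius_retraction av p \<theta>"
  shows "\<theta> (sum f A) = (\<Sum>a\<in>A. \<theta> (f a))"
  using assms
  by (induction A rule: infinite_finite_induct)
     (simp_all add: frobenius_retraction_0, simp add: frobenius_retraction_def)

definition tate_splitting ::
  "nat \<Rightarrow> nat \<Rightarrow> ('k::field \<Rightarrow> 'k) \<Rightarrow> ((nat \<Rightarrow> nat) \<Rightarrow> 'k) \<Rightarrow> (nat \<Rightarrow> nat) \<Rightarrow> 'k" where
  "tate_splitting n p \<theta> x \<mu> = (if multi_index n \<mu> then \<theta> (x (\<lambda>i. p * \<mu> i)) else 0)"

lemma tate_pow_eq:
  assumes "\<forall>\<nu>. \<not> finite_supp \<nu> \<longrightarrow> r \<nu> = 0"
  shows "r [^]\<^bsub>tate_algebra av n\<^esub> (m::nat) = Rep_mpser (Abs_mpser r ^ m)"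
proof (induction m)
  case 0
  show ?case by (simp add: nat_pow_def tate_algebra_def one_mpser.rep_eq)
next
  case (Suc m)
  then show ?case
    using assms by (simp add: nat_pow_def tate_algebra_def times_mpser.rep_eq Abs_mpser_inverse
                              ps_mult_commute[of _ r])
qed

lemma tate_carrier_not_finite_supp: "x \<in> tate_carrier av n \<Longrightarrow> \<not> finite_supp \<nu> \<Longrightarrow> x \<nu> = 0"
  unfolding tate_carrier_def using finite_supp_multi_index by blast

context nonarch_field
begin

lemma tate_power_p:
  assumes "r \<in> tate_carrier av n"
  shows "r [^]\<^bsub>tate_algebra av n\<^esub> p = (\<lambda>\<nu>. if \<forall>i. p dvd \<nu> i then r (\<lambda>i. \<nu> i div p) ^ p else 0)"
proof -
  have r: "\<forall>\<nu>. \<not> finite_supp \<nu> \<longrightarrow> r \<nu> = 0"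
    using tate_carrier_not_finite_supp[OF assms] by blast
  have "Rep_mpser (Abs_mpser r) = r" by (rule Abs_mpser_inverse) (simp add: r)
  then show ?thesis
    using coeff_power_CHAR[OF CHAR_eq p_pos, of "Abs_mpser r"] by (simp add: tate_pow_eq[OF r] fun_eq_iff)
qed

lemma tate_splitting_in_carrier:
  assumes \<theta>: "frobenius_retraction av p \<theta>" and x: "x \<in> tate_carrier av n"
  shows "tate_splitting n p \<theta> x \<in> tate_carrier av n"
  unfolding tate_carrier_def mem_Collect_eq
proof (intro conjI allI impI)
  fix e :: real assume e: "e > 0"
  obtain C where C: "C > 0" "\<And>y. av (\<theta> y) ^ p \<le> C * av y"
    using \<theta> unfolding frobenius_retraction_def by blast
  let ?scale = "\<lambda>(\<mu>::nat \<Rightarrow> nat) i. p * \<mu> i"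
  have "{\<mu>. e \<le> av (tate_splitting n p \<theta> x \<mu>)} \<subseteq> ?scale -` {\<nu>. e ^ p / C \<le> av (x \<nu>)}"
  proof
    fix \<mu> assume "\<mu> \<in> {\<mu>. e \<le> av (tate_splitting n p \<theta> x \<mu>)}"
    then have "e \<le> av (\<theta> (x (?scale \<mu>)))"
      using e by (auto simp: tate_splitting_def split: if_splits)
    then have "e ^ p \<le> av (\<theta> (x (?scale \<mu>))) ^ p" using e by (simp add: power_mono)
    also have "\<dots> \<le> C * av (x (?scale \<mu>))" by (rule C(2))
    finally show "\<mu> \<in> ?scale -` {\<nu>. e ^ p / C \<le> av (x \<nu>)}" using C by (simp add: field_simps)
  qed
  moreover have "inj ?scale" using p_pos by (auto simp: inj_def fun_eq_iff)
  moreover have "finite {\<nu>. e ^ p / C \<le> av (x \<nu>)}"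
    using x e C unfolding tate_carrier_def by auto
  ultimately show "finite {\<mu>. e \<le> av (tate_splitting n p \<theta> x \<mu>)}"
    by (meson finite_subset finite_vimageI)
qed (simp add: tate_splitting_def)

lemma ps_mult_power_p_scaled:
  assumes "finite_supp \<mu>"
  shows "ps_mult (\<lambda>\<nu>. if \<forall>i. p dvd \<nu> i then r (\<lambda>i. \<nu> i div p) ^ p else 0) x (\<lambda>i. p * \<mu> i)
           = (\<Sum>\<alpha>\<in>below \<mu>. r \<alpha> ^ p * x (\<lambda>i. p * (\<mu> i - \<alpha> i)))"
proof -
  let ?p\<mu> = "\<lambda>i. p * \<mu> i"
  let ?T = "{\<beta>\<in>below ?p\<mu>. \<forall>i. p dvd \<beta> i}"
  have "ps_mult (\<lambda>\<nu>. if \<forall>i. p dvd \<nu> i then r (\<lambda>i. \<nu> i div p) ^ p else 0) x ?p\<mu>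
      = (\<Sum>\<beta>\<in>?T. r (\<lambda>i. \<beta> i div p) ^ p * x (\<lambda>i. ?p\<mu> i - \<beta> i))"
    unfolding ps_mult_below using finite_below[OF finite_supp_mult[OF assms]]
    by (simp add: sum.inter_filter if_distrib[of "\<lambda>a. a * _"] cong: if_cong)
  also have "\<dots> = (\<Sum>\<alpha>\<in>below \<mu>. r \<alpha> ^ p * x (\<lambda>i. p * (\<mu> i - \<alpha> i)))"
    \<comment> \<open>substitute \<open>\<beta> = p \<alpha>\<close>\<close>
    by (rule sum.reindex_bij_witness[where i="\<lambda>\<alpha> i. p * \<alpha> i" and j="\<lambda>\<beta> i. \<beta> i div p"])
       (use p_pos in \<open>auto simp: below_def diff_mult_distrib2\<close>,
        metis div_le_mono nonzero_mult_div_cancel_left not_gr0)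
  finally show ?thesis .
qed

lemma tate_splitting_mult:
  assumes \<theta>: "frobenius_retraction av p \<theta>" and r: "r \<in> tate_carrier av n"
  shows "tate_splitting n p \<theta> (ps_mult (r [^]\<^bsub>tate_algebra av n\<^esub> p) x) = ps_mult r (tate_splitting n p \<theta> x)"
proof
  fix \<mu>
  show "tate_splitting n p \<theta> (ps_mult (r [^]\<^bsub>tate_algebra av n\<^esub> p) x) \<mu> = ps_mult r (tate_splitting n p \<theta> x) \<mu>"
  proof (cases "multi_index n \<mu>")
    case True
    have "\<theta> (ps_mult (r [^]\<^bsub>tate_algebra av n\<^esub> p) x (\<lambda>i. p * \<mu> i))
        = (\<Sum>\<alpha>\<in>below \<mu>. r \<alpha> * \<theta> (x (\<lambda>i. p * (\<mu> i - \<alpha> i))))"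
      unfolding tate_power_p[OF r] ps_mult_power_p_scaled[OF finite_supp_multi_index[OF True]]
        frobenius_retraction_sum[OF \<theta>]
      using \<theta> by (simp add: frobenius_retraction_def)
    also have "\<dots> = ps_mult r (tate_splitting n p \<theta> x) \<mu>"
      unfolding ps_mult_below using True by (intro sum.cong refl) (simp add: tate_splitting_def multi_index_def)
    finally show ?thesis using True by (simp add: tate_splitting_def)
  next
    case False
    have "r \<alpha> * tate_splitting n p \<theta> x (\<lambda>i. \<mu> i - \<alpha> i) = 0" for \<alpha>
      using False r by (cases "multi_index n \<alpha>") (auto simp: tate_splitting_def tate_carrier_def multi_index_def)
    then have "ps_mult r (tate_splitting n p \<theta> x) \<mu> = 0"
      unfolding ps_mult_below by (intro sum.neutral ballI)
    then show ?thesis using False by (simp add: tate_splitting_def)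
  qed
qed

theorem frobenius_split_of_retraction:
  assumes \<theta>: "frobenius_retraction av p \<theta>"
  shows "frobenius_split (tate_algebra av n) p"
  unfolding frobenius_split_def
proof (intro bexI[of _ "tate_splitting n p \<theta>"] conjI ballI)
  show "tate_splitting n p \<theta> \<in> carrier (tate_algebra av n) \<rightarrow> carrier (tate_algebra av n)"
    using tate_splitting_in_carrier[OF \<theta>] by (simp add: tate_algebra_def)
  fix r x assume "r \<in> carrier (tate_algebra av n)" "x \<in> carrier (tate_algebra av n)"
  then show "tate_splitting n p \<theta> ((r [^]\<^bsub>tate_algebra av n\<^esub> p) \<otimes>\<^bsub>tate_algebra av n\<^esub> x)
           = r \<otimes>\<^bsub>tate_algebra av n\<^esub> tate_splitting n p \<theta> x"
    using tate_splitting_mult[OF \<theta>] by (simp add: tate_algebra_def)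
next
  show "tate_splitting n p \<theta> (x \<oplus>\<^bsub>tate_algebra av n\<^esub> y)
      = tate_splitting n p \<theta> x \<oplus>\<^bsub>tate_algebra av n\<^esub> tate_splitting n p \<theta> y" for x y
    using \<theta> by (simp add: tate_algebra_def tate_splitting_def frobenius_retraction_def fun_eq_iff)
  have "tate_splitting n p \<theta> ps_one = ps_one"
  proof
    fix \<mu> :: "nat \<Rightarrow> nat"
    have "(\<lambda>i. p * \<mu> i) = (\<lambda>_. 0) \<longleftrightarrow> \<mu> = (\<lambda>_. 0)" using p_pos by (auto simp: fun_eq_iff)
    moreover have "multi_index n (\<lambda>_. 0)" by (simp add: multi_index_def)
    moreover have "\<theta> 1 = 1" using \<theta> by (simp add: frobenius_retraction_def)
    ultimately show "tate_splitting n p \<theta> ps_one \<mu> = ps_one \<mu>"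
      by (simp add: tate_splitting_def ps_one_def frobenius_retraction_0[OF \<theta>])
  qed
  then show "tate_splitting n p \<theta> \<one>\<^bsub>tate_algebra av n\<^esub> = \<one>\<^bsub>tate_algebra av n\<^esub>"
    by (simp add: tate_algebra_def)
qed

end

section \<open>Retractions from orthogonal complements of \<open>k\<close> in \<open>k\<^sup>1\<^sup>/\<^sup>p\<close>\<close>

text \<open>In the model of \<open>k\<^sup>1\<^sup>/\<^sup>p\<close>, \<open>adjoin p H e\<close> is the subspace \<open>H + k e\<close>, so \<open>adjoin p H 1\<close>
  is \<open>k + H\<close>; and \<open>rootp_orthogonal av p D H\<close> says \<open>D \<parallel>c\<parallel> \<le> \<parallel>c + h\<parallel>\<close> for \<open>c \<in> k\<close>, \<open>h \<in> H\<close>,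
  raised to the \<open>p\<close>-th power.\<close>

definition adjoin :: "nat \<Rightarrow> 'k::field set \<Rightarrow> 'k \<Rightarrow> 'k set" where
  "adjoin p H e = {h + s ^ p * e | h s. h \<in> H}"

definition rootp_orthogonal :: "('k::field \<Rightarrow> real) \<Rightarrow> nat \<Rightarrow> real \<Rightarrow> 'k set \<Rightarrow> bool" where
  "rootp_orthogonal av p D H \<longleftrightarrow> (\<forall>c. \<forall>h\<in>H. D * av c ^ p \<le> av (c ^ p + h))"

definition av_closure :: "('k::field \<Rightarrow> real) \<Rightarrow> 'k set \<Rightarrow> 'k set" where
  "av_closure av W = {x. \<forall>e>0. \<exists>w\<in>W. av (x - w) < e}"

lemma adjoin_one: "adjoin p H 1 = {c ^ p + h | c h. h \<in> H}"
  unfolding adjoin_def by (auto simp: add.commute)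

lemma adjoin_mono: "H \<subseteq> H' \<Longrightarrow> adjoin p H e \<subseteq> adjoin p H' e"
  unfolding adjoin_def by blast

lemma mem_adjoin_adjoin:
  "x \<in> adjoin p (adjoin p H e) e' \<longleftrightarrow> (\<exists>h\<in>H. \<exists>s t. x = h + s ^ p * e + t ^ p * e')"
  unfolding adjoin_def by blast

lemma adjoin_adjoin_commute: "adjoin p (adjoin p H e) e' = adjoin p (adjoin p H e') e"
proof -
  have swap: "h + a + b = h + b + a" for h a b :: 'a by (simp add: add_ac)
  show ?thesis unfolding set_eq_iff mem_adjoin_adjoin using swap by blast
qed

lemma rootp_subspaceD:
  assumes "rootp_subspace p H"
  shows "0 \<in> H" "x \<in> H \<Longrightarrow> y \<in> H \<Longrightarrow> x + y \<in> H" "x \<in> H \<Longrightarrow> c ^ p * x \<in> H"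
  using assms unfolding rootp_subspace_def rootp_smult_def by auto

lemma rootp_subspaceI:
  assumes "0 \<in> H" "\<And>x y. x \<in> H \<Longrightarrow> y \<in> H \<Longrightarrow> x + y \<in> H" "\<And>c x. x \<in> H \<Longrightarrow> c ^ p * x \<in> H"
  shows "rootp_subspace p H"
  using assms unfolding rootp_subspace_def rootp_smult_def by auto

lemma rootp_subspace_sum:
  assumes "rootp_subspace p W" "finite F" "F \<subseteq> W"
  shows "(\<Sum>b\<in>F. c b ^ p * b) \<in> W"
  using assms(2,3) by (induction F rule: finite_induct) (simp_all add: rootp_subspaceD[OF assms(1)])

lemma rootp_subspace_Union_chain:
  assumes "C \<noteq> {}" "subset.chain {H. rootp_subspace p H} C"
  shows "rootp_subspace p (\<Union>C)"
proof -
  have sub: "\<And>X. X \<in> C \<Longrightarrow> rootp_subspace p X"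
    and lin: "\<And>X Y. X \<in> C \<Longrightarrow> Y \<in> C \<Longrightarrow> X \<subseteq> Y \<or> Y \<subseteq> X"
    using assms(2) unfolding subset.chain_def by auto
  show ?thesis
  proof (rule rootp_subspaceI)
    obtain X where "X \<in> C" using assms(1) by blast
    then show "0 \<in> \<Union>C" using rootp_subspaceD(1)[OF sub] by blast
    show "x + y \<in> \<Union>C" if x: "x \<in> \<Union>C" and y: "y \<in> \<Union>C" for x y
    proof -
      obtain X Y where XY: "X \<in> C" "Y \<in> C" and "x \<in> X" "y \<in> Y" using x y by blast
      then have "x + y \<in> X \<or> x + y \<in> Y"
        using lin[OF XY] rootp_subspaceD(2)[OF sub[OF XY(1)]] rootp_subspaceD(2)[OF sub[OF XY(2)]]
        by blast
      then show ?thesis using XY by blast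
    qed
    show "c ^ p * x \<in> \<Union>C" if "x \<in> \<Union>C" for c x
      using that rootp_subspaceD(3)[OF sub] by blast
  qed
qed

context nonarch_field
begin

lemma rootp_subspace_minus:
  fixes H :: "'k set"
  assumes "rootp_subspace p H" "x \<in> H"
  shows "- x \<in> H"
proof -
  have "(- 1) ^ p * x = - x" using frobenius_minus[of 1] by simp
  then show ?thesis using rootp_subspaceD(3)[OF assms, of "- 1"] by simp
qed

lemma rootp_subspace_diff:
  fixes H :: "'k set"
  assumes "rootp_subspace p H" "x \<in> H" "y \<in> H"
  shows "x - y \<in> H"
  using rootp_subspaceD(2)[OF assms(1,2) rootp_subspace_minus[OF assms(1,3)]] by simp

lemma rootp_subspace_adjoin:
  fixes H :: "'k set"
  assumes "rootp_subspace p H"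
  shows "rootp_subspace p (adjoin p H e)"
proof (rule rootp_subspaceI)
  show "0 \<in> adjoin p H e"
    unfolding adjoin_def using rootp_subspaceD(1)[OF assms] p_pos by force
  show "x + y \<in> adjoin p H e" if x: "x \<in> adjoin p H e" and y: "y \<in> adjoin p H e" for x y
  proof -
    obtain h s h' s' where "h \<in> H" "h' \<in> H" "x = h + s ^ p * e" "y = h' + s' ^ p * e"
      using x y unfolding adjoin_def by blast
    moreover have "x + y = (h + h') + (s + s') ^ p * e"
      using calculation by (simp add: frobenius_add distrib_right add_ac)
    ultimately show ?thesis unfolding adjoin_def using rootp_subspaceD(2)[OF assms] by blast
  qed
  show "c ^ p * x \<in> adjoin p H e" if x: "x \<in> adjoin p H e" for c x
  proof -
    obtain h s where "h \<in> H" "x = h + s ^ p * e" using x unfolding adjoin_def by blast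
    moreover have "c ^ p * x = c ^ p * h + (c * s) ^ p * e"
      using calculation by (simp add: algebra_simps power_mult_distrib)
    ultimately show ?thesis unfolding adjoin_def using rootp_subspaceD(3)[OF assms] by blast
  qed
qed

lemma subset_adjoin: "H \<subseteq> adjoin p H e"
  unfolding adjoin_def using p_pos by force

lemma mem_adjoin_self:
  assumes "rootp_subspace p H"
  shows "e \<in> adjoin p H e"
proof -
  have "e = 0 + 1 ^ p * e" by simp
  then show ?thesis using rootp_subspaceD(1)[OF assms] unfolding adjoin_def by blast
qed

lemma rootp_orthogonal_mono:
  assumes "D' \<le> D" "rootp_orthogonal av p D H"
  shows "rootp_orthogonal av p D' H"
  unfolding rootp_orthogonal_def
proof (intro allI ballI)
  fix c h assume "h \<in> H"
  have "D' * av c ^ p \<le> D * av c ^ p" using assms(1) by (simp add: mult_right_mono)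
  also have "\<dots> \<le> av (c ^ p + h)" using assms(2) \<open>h \<in> H\<close> unfolding rootp_orthogonal_def by blast
  finally show "D' * av c ^ p \<le> av (c ^ p + h)" .
qed

lemma rootp_orthogonal_decomposition_unique:
  fixes H :: "'k set"
  assumes H: "rootp_subspace p H" and D: "D > 0" "rootp_orthogonal av p D H"
    and "h \<in> H" "h' \<in> H" "c ^ p + h = c' ^ p + h'"
  shows "c = c'"
proof -
  have "D * av (c - c') ^ p \<le> av ((c - c') ^ p + (h - h'))"
    using D(2) rootp_subspace_diff[OF H assms(4,5)] unfolding rootp_orthogonal_def by blast
  also have "(c - c') ^ p + (h - h') = 0" using assms(6) by (simp add: frobenius_diff algebra_simps)
  finally have "av (c - c') ^ p \<le> 0" using D(1) by (simp add: mult_le_0_iff)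
  then have "av (c - c') ^ p = 0" using zero_le_power[OF av_nonneg] order_antisym by blast
  then show ?thesis by simp
qed

text \<open>Orthogonality makes the decomposition \<open>y = c\<^sup>p + h\<close> unique, and \<open>c\<close> depends boundedly on \<open>y\<close>.\<close>

theorem frobenius_retraction_of_complement:
  fixes H :: "'k set"
  assumes H: "rootp_subspace p H" and D: "D > 0" "rootp_orthogonal av p D H"
    and complement: "adjoin p H 1 = UNIV"
  shows "\<exists>\<theta>. frobenius_retraction av p \<theta>"
proof -
  define \<theta> where "\<theta> y = (THE c. \<exists>h\<in>H. y = c ^ p + h)" for y
  have \<theta>_eq: "\<theta> (c ^ p + h) = c" if h: "h \<in> H" for c h
    unfolding \<theta>_def
  proof (rule the_equality)
    show "\<exists>h'\<in>H. c ^ p + h = c ^ p + h'" using h by blast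
    fix c' assume "\<exists>h'\<in>H. c ^ p + h = c' ^ p + h'"
    then obtain h' where "h' \<in> H" "c ^ p + h = c' ^ p + h'" by blast
    then show "c' = c" using rootp_orthogonal_decomposition_unique[OF H D h] by metis
  qed
  have decompose: "\<exists>c h. h \<in> H \<and> y = c ^ p + h" for y
    using complement unfolding adjoin_one by blast
  have "\<theta> (x + y) = \<theta> x + \<theta> y" for x y
  proof -
    obtain c h where h: "h \<in> H" and x: "x = c ^ p + h" using decompose by blast
    obtain c' h' where h': "h' \<in> H" and y: "y = c' ^ p + h'" using decompose by blast
    have "x + y = (c + c') ^ p + (h + h')" unfolding x y by (simp add: frobenius_add add_ac)
    then have "\<theta> (x + y) = c + c'" using \<theta>_eq rootp_subspaceD(2)[OF H h h'] by simp
    then show ?thesis unfolding x y using \<theta>_eq h h' by simp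
  qed
  moreover have "\<theta> (a ^ p * y) = a * \<theta> y" for a y
  proof -
    obtain c h where h: "h \<in> H" and y: "y = c ^ p + h" using decompose by blast
    have "a ^ p * y = (a * c) ^ p + a ^ p * h" unfolding y by (simp add: algebra_simps power_mult_distrib)
    then show ?thesis unfolding y using \<theta>_eq rootp_subspaceD(3)[OF H h] h by simp
  qed
  moreover have "\<theta> 1 = 1" using \<theta>_eq[of 0 1] rootp_subspaceD(1)[OF H] by simp
  moreover have "av (\<theta> y) ^ p \<le> (1 / D) * av y" for y
  proof -
    obtain c h where h: "h \<in> H" and y: "y = c ^ p + h" using decompose by blast
    have "D * av c ^ p \<le> av y" using D(2) h unfolding y rootp_orthogonal_def by blast
    then show ?thesis using D(1) \<theta>_eq[OF h] unfolding y by (simp add: field_simps)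
  qed
  moreover have "1 / D > 0" using D(1) by simp
  ultimately have "frobenius_retraction av p \<theta>"
    unfolding frobenius_retraction_def by blast
  then show ?thesis by blast
qed

end

section \<open>The polar case\<close>

lemma exists_powr_int_bracket:
  fixes t r :: real
  assumes t: "0 < t" "t < 1" and r: "r > 0"
  shows "\<exists>m::int. t powr (m + 1) < r \<and> r \<le> t powr m"
proof -
  define L where "L = ln r / ln t"
  define m where "m = \<lfloor>L\<rfloor>"
  have lt: "ln t < 0" using t by simp
  have L: "L * ln t = ln r" unfolding L_def using lt by simp
  have "real_of_int m * ln t \<ge> L * ln t" using lt unfolding m_def by (simp add: mult_right_mono_neg)
  then have "exp (real_of_int m * ln t) \<ge> r" using L r by (metis exp_ln exp_le_cancel_iff)
  moreover have "(real_of_int m + 1) * ln t < L * ln t"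
    using lt unfolding m_def by (simp add: mult_strict_right_mono_neg)
  then have "exp ((real_of_int m + 1) * ln t) < r" using L r by (metis exp_ln exp_less_cancel_iff)
  ultimately show ?thesis using t by (intro exI[of _ m]) (simp add: powr_def mult.commute)
qed

context nonarch_field
begin

lemma exists_av_less_1:
  assumes "nontrivial_value_group av"
  obtains \<pi> where "\<pi> \<noteq> 0" "av \<pi> < 1"
proof -
  obtain x where x: "x \<noteq> 0" "av x \<noteq> 1" using assms unfolding nontrivial_value_group_def by blast
  show ?thesis
  proof (cases "av x < 1")
    case False
    then have "av (inverse x) < 1" using x by (simp add: av_inverse inverse_less_1_iff)
    then show ?thesis using x that[of "inverse x"] by simp
  qed (use x that in blast)
qed

lemma powr_inverse_power_p: "a \<ge> 0 \<Longrightarrow> (a ^ p) powr (1 / real p) = (a::real)"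
  using p_pos by (cases "a = 0") (simp_all add: powr_realpow[symmetric] powr_powr)

lemma power_p_powr_inverse: "a \<ge> 0 \<Longrightarrow> (a powr (1 / real p)) ^ p = (a::real)"
  using p_pos by (cases "a = 0") (simp_all add: powr_realpow[symmetric] powr_powr)

lemma rootp_norm_nonneg [simp]: "rootp_norm av p y \<ge> 0"
  by (simp add: rootp_norm_def)

lemma rootp_norm_power_p [simp]: "rootp_norm av p y ^ p = av y"
  unfolding rootp_norm_def by (simp add: power_p_powr_inverse)

lemma rootp_norm_smult: "rootp_norm av p (rootp_smult p a y) = av a * rootp_norm av p y"
  unfolding rootp_norm_def rootp_smult_def
  by (simp add: av_mult av_power powr_mult powr_inverse_power_p)

text \<open>Rescaling by powers of \<open>\<pi>\<close> turns the bound on the unit ball into \<open>|f y| \<le> \<parallel>y\<parallel> / |\<pi>|\<close>.\<close>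

lemma rootp_functional_bound:
  assumes f: "rootp_linear_functional p f"
    and unit_ball: "\<And>y. rootp_norm av p y \<le> 1 \<Longrightarrow> av (f y) \<le> 1"
    and \<pi>: "\<pi> \<noteq> 0" "av \<pi> < 1"
  shows "av (f y) * av \<pi> \<le> rootp_norm av p y"
proof (cases "y = 0")
  case True
  have "f 0 = 0" using f unfolding rootp_linear_functional_def by (metis add_cancel_right_right)
  then show ?thesis using True by simp
next
  case False
  define t r where "t = av \<pi>" and "r = rootp_norm av p y"
  have t: "0 < t" "t < 1" using \<pi> av_pos unfolding t_def by auto
  have r: "r > 0" using False av_pos[OF False] unfolding r_def rootp_norm_def by simp
  obtain m :: int where m: "t powr (m + 1) < r" "r \<le> t powr m"
    using exists_powr_int_bracket[OF t r] by auto
  define a where "a = \<pi> powi (- m)"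
  have av_a: "av a = t powr (- m)"
    unfolding a_def av_power_int t_def using powr_real_of_int'[of "av \<pi>" "- m"] \<pi>(1) by simp
  have inverse: "t powr m * av a = 1" using t by (simp add: av_a powr_add[symmetric])
  have "av a * r \<le> t powr (- m) * t powr m" using m(2) av_a t by (simp add: mult_left_mono)
  also have "\<dots> = 1" using t by (simp add: powr_add[symmetric])
  finally have "rootp_norm av p (rootp_smult p a y) \<le> 1" by (simp add: rootp_norm_smult r_def)
  then have "av (a * f y) \<le> 1"
    using unit_ball f unfolding rootp_linear_functional_def by metis
  then have "t powr m * (av a * av (f y)) \<le> t powr m" using t by (simp add: av_mult)
  then have "av (f y) * t \<le> t powr m * t"
    using inverse t by (simp add: mult.assoc[symmetric])
  also have "\<dots> = t powr (m + 1)" using t by (simp add: powr_add)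
  finally show ?thesis using m(1) unfolding t_def r_def by simp
qed

theorem frobenius_retraction_of_polar:
  assumes "nontrivial_value_group av" and polar: "rootp_polar av p"
  shows "\<exists>\<theta>. frobenius_retraction av p \<theta>"
proof -
  obtain \<pi> where \<pi>: "\<pi> \<noteq> 0" "av \<pi> < 1" using exists_av_less_1[OF assms(1)] by blast
  define c where "c = inverse \<pi>"
  have "1 < av c" using \<pi> unfolding c_def by (simp add: av_inverse one_less_inverse_iff av_pos)
  then have "1 < rootp_norm av p (c ^ p)"
    unfolding rootp_norm_def av_power using p_pos
    by (simp add: powr_realpow[symmetric] powr_powr less_le_trans[OF zero_less_one])
  then obtain f where f: "rootp_linear_functional p f"
    and unit_ball: "\<And>y. rootp_norm av p y \<le> 1 \<Longrightarrow> av (f y) \<le> 1" and "av (f (c ^ p)) > 1"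
    using polar unfolding rootp_polar_def by blast
  have f_add: "f (x + y) = f x + f y" and f_smult: "f (a ^ p * y) = a * f y" for x y a
    using f unfolding rootp_linear_functional_def rootp_smult_def by auto
  have "f 1 \<noteq> 0" using \<open>av (f (c ^ p)) > 1\<close> f_smult[of c 1] by auto
  define \<theta> where "\<theta> y = f y / f 1" for y
  define K where "K = (av \<pi> * av (f 1)) ^ p"
  have K: "K > 0" unfolding K_def using \<open>f 1 \<noteq> 0\<close> \<pi> av_pos by simp
  have bound: "av (\<theta> y) ^ p \<le> inverse K * av y" for y
  proof -
    have "av (f y) * av \<pi> \<le> rootp_norm av p y" by (rule rootp_functional_bound[OF f unit_ball \<pi>])
    from power_mono[OF this mult_nonneg_nonneg[OF av_nonneg av_nonneg], of p]
    have "(av (f y) * av \<pi>) ^ p \<le> av y" by simp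
    moreover have "av (f y) = av (\<theta> y) * av (f 1)"
      using av_mult[of "\<theta> y" "f 1"] \<open>f 1 \<noteq> 0\<close> by (simp add: \<theta>_def)
    ultimately have "av (\<theta> y) ^ p * K \<le> av y"
      unfolding K_def by (simp add: power_mult_distrib ac_simps)
    then show ?thesis using K by (simp add: divide_inverse_commute[symmetric] pos_le_divide_eq)
  qed
  have "\<exists>C>0. \<forall>y. av (\<theta> y) ^ p \<le> C * av y"
    using bound K by (intro exI[of _ "inverse K"]) simp
  then have "frobenius_retraction av p \<theta>"
    unfolding frobenius_retraction_def using \<open>f 1 \<noteq> 0\<close>
    by (simp add: \<theta>_def f_add f_smult add_divide_distrib)
  then show ?thesis by blast
qed

end

section \<open>The spherically complete case\<close>

context nonarch_field
begin

text \<open>Disks that pairwise intersect have a common point: choose a decreasing sequence of them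
  whose radii tend to the infimum of all radii.\<close>

lemma spherically_complete_common_point:
  assumes sc: "spherically_complete av"
    and pairwise: "\<And>i j. av (c i - c j) \<le> max (r i) (r j)" and r: "\<And>i. r i \<ge> 0"
  shows "\<exists>x. \<forall>i. av (x - c i) \<le> r i"
proof -
  define R where "R = Inf (range r)"
  have bdd: "bdd_below (range r)" unfolding bdd_below_def using r by blast
  have R_le: "R \<le> r i" for i unfolding R_def using bdd by (simp add: cInf_lower)
  have R_nonneg: "R \<ge> 0" unfolding R_def using r by (intro cInf_greatest) auto
  define s where "s n = R + 1 / real (Suc n)" for n
  have "\<exists>i. r i < s n" for n
    using cInf_lessD[of "range r" "s n"] unfolding s_def R_def by auto
  then obtain idx where idx: "\<And>n. r (idx n) < s n" by metis
  have s_Suc: "s (Suc n) \<le> s n" for n unfolding s_def by (simp add: frac_le)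
  have "(\<Inter>n. closed_disk av (c (idx n)) (s n)) \<noteq> {}"
    using sc unfolding spherically_complete_def
  proof (elim allE impE, intro conjI allI subsetI)
    show "0 \<le> s n" for n unfolding s_def using R_nonneg by simp
    fix n z assume "z \<in> closed_disk av (c (idx (Suc n))) (s (Suc n))"
    then have "av (z - c (idx (Suc n))) \<le> s n" using s_Suc[of n] by (simp add: closed_disk_def)
    moreover have "av (c (idx (Suc n)) - c (idx n)) \<le> s n"
      using pairwise[of "idx (Suc n)" "idx n"] idx[of n] idx[of "Suc n"] s_Suc[of n] by auto
    ultimately show "z \<in> closed_disk av (c (idx n)) (s n)"
      using av_diff_triangle[of z "c (idx n)" "c (idx (Suc n))"] by (simp add: closed_disk_def)
  qed
  then obtain x where x: "\<And>n. av (x - c (idx n)) \<le> s n" by (auto simp: closed_disk_def)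
  have "av (x - c i) \<le> r i" for i
  proof (rule ccontr)
    assume "\<not> av (x - c i) \<le> r i"
    then obtain n where n: "1 / real (Suc n) < av (x - c i) - r i"
      using reals_Archimedean[of "av (x - c i) - r i"] by (auto simp: inverse_eq_divide)
    have "max (r (idx n)) (r i) \<le> r i + 1 / real (Suc n)"
      using idx[of n] R_le[of i] unfolding s_def by simp
    then have "av (c (idx n) - c i) \<le> r i + 1 / real (Suc n)"
      using pairwise[of "idx n" i] by linarith
    moreover have "av (x - c (idx n)) \<le> r i + 1 / real (Suc n)"
      using x[of n] R_le[of i] unfolding s_def by simp
    ultimately show False
      using av_diff_triangle[of x "c i" "c (idx n)"] n by simp
  qed
  then show ?thesis by blast
qed

lemma exists_maximal_rootp_orthogonal:
  "\<exists>M :: 'k set. rootp_subspace p M \<and> rootp_orthogonal av p 1 M \<and>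
     (\<forall>X. rootp_subspace p X \<and> rootp_orthogonal av p 1 X \<and> M \<subseteq> X \<longrightarrow> X = M)"
proof -
  let ?A = "{H :: 'k set. rootp_subspace p H \<and> rootp_orthogonal av p 1 H}"
  have "\<exists>M\<in>?A. \<forall>X\<in>?A. M \<subseteq> X \<longrightarrow> X = M"
  proof (rule subset_Zorn_nonempty)
    have "rootp_subspace p {0::'k}" by (rule rootp_subspaceI) simp_all
    moreover have "rootp_orthogonal av p 1 {0::'k}" by (simp add: rootp_orthogonal_def av_power)
    ultimately show "?A \<noteq> {}" by blast
  next
    fix C assume C: "C \<noteq> {}" "subset.chain ?A C"
    then have "subset.chain {H. rootp_subspace p H} C" by (auto simp: subset.chain_def)
    then have "rootp_subspace p (\<Union>C)" by (rule rootp_subspace_Union_chain[OF C(1)])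
    moreover have "rootp_orthogonal av p 1 (\<Union>C)"
      using C(2) unfolding subset.chain_def rootp_orthogonal_def by blast
    ultimately show "\<Union>C \<in> ?A" by blast
  qed
  then show ?thesis by blast
qed

text \<open>The best approximation \<open>a\<close> of \<open>y\<close> by \<open>k\<close> modulo \<open>M\<close>: \<open>|a - z| \<le> dist(y, z + M)\<close> for all
  \<open>z \<in> k\<close>. The disks of radii \<open>dist(y, z + M)\<close> around the \<open>z\<close> pairwise intersect because \<open>M\<close>
  is orthogonal to \<open>k\<close>.\<close>

lemma exists_best_approximation:
  fixes M :: "'k set"
  assumes sc: "spherically_complete av"
    and M: "rootp_subspace p M" "rootp_orthogonal av p 1 M"
  shows "\<exists>a. \<forall>z. \<forall>h\<in>M. av (a - z) ^ p \<le> av (y - z ^ p + h)"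
proof -
  define \<rho> where "\<rho> z = Inf ((\<lambda>h. av (y - z ^ p + h)) ` M)" for z
  have bdd: "bdd_below ((\<lambda>h. av (y - z ^ p + h)) ` M)" for z
    by (auto intro: bdd_belowI[of _ 0])
  have \<rho>_le: "\<rho> z \<le> av (y - z ^ p + h)" if "h \<in> M" for z h
    unfolding \<rho>_def using bdd that by (intro cInf_lower) auto
  have \<rho>_nonneg: "\<rho> z \<ge> 0" for z
    unfolding \<rho>_def using rootp_subspaceD(1)[OF M(1)] by (intro cInf_greatest) auto
  have \<rho>_less: "\<exists>h\<in>M. av (y - z ^ p + h) < v" if "\<rho> z < v" for z v
    using cInf_lessD[of "(\<lambda>h. av (y - z ^ p + h)) ` M" v] that rootp_subspaceD(1)[OF M(1)]
    unfolding \<rho>_def by auto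
  define r where "r z = \<rho> z powr (1 / real p)" for z
  have r_power: "r z ^ p = \<rho> z" for z unfolding r_def using \<rho>_nonneg by (simp add: power_p_powr_inverse)
  have "av (z - z') ^ p \<le> max (\<rho> z) (\<rho> z')" for z z'
  proof (rule ccontr)
    assume "\<not> av (z - z') ^ p \<le> max (\<rho> z) (\<rho> z')"
    then obtain h h' where h: "h \<in> M" "av (y - z ^ p + h) < av (z - z') ^ p"
      and h': "h' \<in> M" "av (y - z' ^ p + h') < av (z - z') ^ p"
      using \<rho>_less by (metis le_max_iff_disj not_le)
    have "av (z - z') ^ p \<le> av ((z - z') ^ p + (h' - h))"
      using M(2) rootp_subspace_diff[OF M(1) h'(1) h(1)] unfolding rootp_orthogonal_def by simp
    also have "(z - z') ^ p + (h' - h) = (y - z' ^ p + h') - (y - z ^ p + h)"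
      by (simp add: frobenius_diff)
    also have "av \<dots> \<le> max (av (y - z' ^ p + h')) (av (y - z ^ p + h))"
      by (rule av_diff_le)
    finally show False using h(2) h'(2) by simp
  qed
  then have "av (z - z') \<le> max (r z) (r z')" for z z'
    unfolding r_power[symmetric] by (metis le_max_iff_disj power_p_le_imp_le r_def powr_ge_zero)
  then obtain a where a: "\<And>z. av (a - z) \<le> r z"
    using spherically_complete_common_point[OF sc, of "\<lambda>z. z" r] unfolding r_def by auto
  have "av (a - z) ^ p \<le> av (y - z ^ p + h)" if "h \<in> M" for z h
    using power_mono[OF a[of z] av_nonneg, of p] r_power[of z] \<rho>_le[OF that, of z] by simp
  then show ?thesis by blast
qed

lemma rootp_orthogonal_adjoin_best_approximation:
  fixes M :: "'k set"
  assumes M: "rootp_subspace p M" "rootp_orthogonal av p 1 M"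
    and a: "\<And>z h. h \<in> M \<Longrightarrow> av (a - z) ^ p \<le> av (y - z ^ p + h)"
  shows "rootp_orthogonal av p 1 (adjoin p M (y - a ^ p))"
  unfolding rootp_orthogonal_def
proof (intro allI ballI)
  fix c x assume "x \<in> adjoin p M (y - a ^ p)"
  then obtain h s where h: "h \<in> M" and x: "x = h + s ^ p * (y - a ^ p)" unfolding adjoin_def by blast
  show "1 * av c ^ p \<le> av (c ^ p + x)"
  proof (cases "s = 0")
    case True
    then show ?thesis using M(2) h p_pos unfolding x rootp_orthogonal_def by (simp add: power_0_left)
  next
    case False
    define z where "z = a - c / s"
    have "c ^ p + x = s ^ p * (y - z ^ p + inverse s ^ p * h)"
      using False unfolding x z_def frobenius_diff
      by (simp add: algebra_simps power_divide power_inverse field_simps)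
    then have "av (c ^ p + x) = av s ^ p * av (y - z ^ p + inverse s ^ p * h)"
      by (simp add: av_mult av_power)
    also have "\<dots> \<ge> av s ^ p * av (a - z) ^ p"
      using a[OF rootp_subspaceD(3)[OF M(1) h], of z] by (simp add: mult_left_mono)
    also have "av s ^ p * av (a - z) ^ p = av c ^ p"
      using False unfolding z_def by (simp add: av_mult[symmetric] power_mult_distrib[symmetric])
    finally show ?thesis by simp
  qed
qed

theorem frobenius_retraction_of_spherically_complete:
  assumes sc: "spherically_complete av"
  shows "\<exists>\<theta>. frobenius_retraction av p \<theta>"
proof -
  obtain M :: "'k set" where M: "rootp_subspace p M" "rootp_orthogonal av p 1 M"
    and maximal: "\<And>X. rootp_subspace p X \<Longrightarrow> rootp_orthogonal av p 1 X \<Longrightarrow> M \<subseteq> X \<Longrightarrow> X = M"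
    using exists_maximal_rootp_orthogonal by blast
  have "UNIV = adjoin p M 1"
  proof (rule UNIV_eq_I)
    fix y
    obtain a where a: "\<And>z h. h \<in> M \<Longrightarrow> av (a - z) ^ p \<le> av (y - z ^ p + h)"
      using exists_best_approximation[OF sc M] by blast
    have "adjoin p M (y - a ^ p) = M"
      by (rule maximal[OF rootp_subspace_adjoin[OF M(1)]
            rootp_orthogonal_adjoin_best_approximation[OF M a] subset_adjoin])
    then have "y - a ^ p \<in> M" using mem_adjoin_self[OF M(1)] by metis
    then show "y \<in> adjoin p M 1" unfolding adjoin_one by force
  qed
  then show ?thesis
    using frobenius_retraction_of_complement[OF M(1) _ M(2)] by simp
qed

end

section \<open>The case of a dense subspace with a countable basis\<close>

context nonarch_field
begin

lemma subset_av_closure: "W \<subseteq> av_closure av W"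
  unfolding av_closure_def by force

lemma av_closure_singleton_0 [simp]: "av_closure av {0} = {0}"
proof
  show "av_closure av {0} \<subseteq> {0}"
  proof
    fix x assume x: "x \<in> av_closure av {0}"
    show "x \<in> {0}"
    proof (rule ccontr)
      assume "x \<notin> {0}"
      then have "av x > 0" using av_pos by simp
      then show False using x unfolding av_closure_def by fastforce
    qed
  qed
qed (rule subset_av_closure)

lemma rootp_subspace_av_closure:
  fixes W :: "'k set"
  assumes W: "rootp_subspace p W"
  shows "rootp_subspace p (av_closure av W)"
proof (rule rootp_subspaceI)
  show "0 \<in> av_closure av W" using subset_av_closure rootp_subspaceD(1)[OF W] by blast
  show "x + y \<in> av_closure av W" if x: "x \<in> av_closure av W" and y: "y \<in> av_closure av W" for x y
    unfolding av_closure_def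
  proof (intro CollectI allI impI)
    fix \<epsilon> :: real assume "\<epsilon> > 0"
    then obtain w w' where "w \<in> W" "av (x - w) < \<epsilon>" "w' \<in> W" "av (y - w') < \<epsilon>"
      using x y unfolding av_closure_def by blast
    moreover have "av (x + y - (w + w')) \<le> max (av (x - w)) (av (y - w'))"
      using av_add_le[of "x - w" "y - w'"] by (simp add: algebra_simps)
    ultimately show "\<exists>w\<in>W. av (x + y - w) < \<epsilon>"
      using rootp_subspaceD(2)[OF W] by (metis max_less_iff_conj order_le_less_trans)
  qed
  show "c ^ p * x \<in> av_closure av W" if x: "x \<in> av_closure av W" for c x
  proof (cases "c = 0")
    case True
    then show ?thesis using p_pos \<open>0 \<in> av_closure av W\<close> by (simp add: power_0_left)
  next
    case False
    show ?thesis unfolding av_closure_def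
    proof (intro CollectI allI impI)
      fix \<epsilon> :: real assume "\<epsilon> > 0"
      then have "\<epsilon> / av c ^ p > 0" using av_pos[OF False] by simp
      then obtain w where "w \<in> W" "av (x - w) < \<epsilon> / av c ^ p"
        using x unfolding av_closure_def by blast
      moreover have "av (c ^ p * x - c ^ p * w) = av c ^ p * av (x - w)"
        by (simp add: av_mult av_power right_diff_distrib[symmetric])
      ultimately show "\<exists>w\<in>W. av (c ^ p * x - w) < \<epsilon>"
        using av_pos[OF False] rootp_subspaceD(3)[OF W]
        by (metis mult.commute pos_less_divide_eq zero_less_power)
    qed
  qed
qed

lemma rootp_orthogonal_av_closure:
  assumes orth: "rootp_orthogonal av p D H"
  shows "rootp_orthogonal av p D (av_closure av H)"
  unfolding rootp_orthogonal_def
proof (intro allI ballI)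
  fix c y assume y: "y \<in> av_closure av H"
  show "D * av c ^ p \<le> av (c ^ p + y)"
  proof (rule ccontr)
    assume "\<not> D * av c ^ p \<le> av (c ^ p + y)"
    then have less: "av (c ^ p + y) < D * av c ^ p" by simp
    then have "D * av c ^ p > 0" using av_nonneg[of "c ^ p + y"] by linarith
    then obtain h where h: "h \<in> H" "av (y - h) < D * av c ^ p"
      using y unfolding av_closure_def by blast
    have "D * av c ^ p \<le> av (c ^ p + h)" using orth h(1) unfolding rootp_orthogonal_def by blast
    also have "\<dots> \<le> max (av (c ^ p + y)) (av (y - h))"
      using av_diff_le[of "c ^ p + y" "y - h"] by simp
    finally show False using less h(2) by simp
  qed
qed

lemma cauchy_limit_power_p:
  assumes cplt: "av_complete av" and K: "K > 0"
    and cauchy: "\<And>i j. av (a i - a j) ^ p \<le> K * max (1 / real (Suc i)) (1 / real (Suc j))"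
  shows "\<exists>L. \<forall>\<epsilon>>0. \<exists>N. \<forall>n\<ge>N. av (a n - L) ^ p < \<epsilon>"
proof -
  have "\<exists>N. \<forall>m\<ge>N. \<forall>n\<ge>N. av (a m - a n) < \<epsilon>" if \<epsilon>: "\<epsilon> > 0" for \<epsilon>
  proof -
    obtain N where N: "inverse (real (Suc N)) < \<epsilon> ^ p / K"
      using reals_Archimedean K \<epsilon> by (meson divide_pos_pos zero_less_power)
    have "av (a m - a n) < \<epsilon>" if "N \<le> m" "N \<le> n" for m n
    proof -
      have "max (1 / real (Suc m)) (1 / real (Suc n)) \<le> 1 / real (Suc N)"
        using that by (simp add: frac_le)
      then have "av (a m - a n) ^ p \<le> K * (1 / real (Suc N))"
        using cauchy[of m n] K by (meson mult_left_mono less_imp_le order_trans)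
      also have "\<dots> < \<epsilon> ^ p" using N K by (simp add: field_simps)
      finally show ?thesis using \<epsilon> by (meson power_less_imp_less_base less_imp_le)
    qed
    then show ?thesis by blast
  qed
  then obtain L where L: "\<forall>\<epsilon>>0. \<exists>N. \<forall>n\<ge>N. av (a n - L) < \<epsilon>"
    using cplt unfolding av_complete_def by blast
  have "\<exists>N. \<forall>n\<ge>N. av (a n - L) ^ p < \<epsilon>" if "\<epsilon> > 0" for \<epsilon>
  proof -
    have "min 1 \<epsilon> > 0" using \<open>\<epsilon> > 0\<close> by simp
    then obtain N where N: "\<And>n. n \<ge> N \<Longrightarrow> av (a n - L) < min 1 \<epsilon>" using L by blast
    have "av (a n - L) ^ p \<le> av (a n - L) ^ 1" if "n \<ge> N" for n
      using N[OF that] p_pos by (intro power_decreasing) auto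
    then show ?thesis using N by (metis le_less_trans min_less_iff_conj power_one_right)
  qed
  then show ?thesis by blast
qed

lemma approximation_coefficients_cauchy:
  fixes W :: "'k set"
  assumes W: "rootp_subspace p W" and e: "e \<noteq> 0" and T: "T > 0"
    and orth: "\<And>u a. u \<in> W \<Longrightarrow> av (a ^ p * e) \<le> T * av (u + a ^ p * e)"
    and u: "\<And>j. u j \<in> W" and close: "\<And>j. av (x - (u j + a j ^ p * e)) < 1 / real (Suc j)"
  shows "av (a i - a j) ^ p \<le> (T / av e) * max (1 / real (Suc i)) (1 / real (Suc j))"
proof -
  have "(u i + a i ^ p * e) - (u j + a j ^ p * e) = (u i - u j) + (a i - a j) ^ p * e"
    by (simp add: frobenius_diff algebra_simps)
  then have "av ((a i - a j) ^ p * e) \<le> T * av ((u i + a i ^ p * e) - (u j + a j ^ p * e))"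
    using orth[OF rootp_subspace_diff[OF W u u]] by metis
  also have "\<dots> \<le> T * max (1 / real (Suc i)) (1 / real (Suc j))"
    using av_diff_triangle[of "u i + a i ^ p * e" "u j + a j ^ p * e" x] close[of i] close[of j] T
    by (simp add: av_minus_commute[of _ x] mult_left_mono)
  finally have "av (a i - a j) ^ p * av e \<le> T * max (1 / real (Suc i)) (1 / real (Suc j))"
    by (simp add: av_mult av_power mult.commute)
  then show ?thesis using av_pos[OF e] by (simp add: pos_le_divide_eq mult.commute)
qed

text \<open>If \<open>e\<close> is orthogonal to \<open>W\<close> up to the factor \<open>T\<close>, a sequence \<open>u\<^sub>j + a\<^sub>j e\<close> (\<open>u\<^sub>j \<in> W\<close>)
  converging to \<open>x\<close> forces \<open>a\<^sub>j\<close> to be Cauchy; its limit \<open>L\<close> exhibits \<open>x - L e\<close> as a limit of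
  the \<open>u\<^sub>j\<close>.\<close>

lemma av_closure_adjoin_subset:
  fixes W :: "'k set"
  assumes cplt: "av_complete av" and W: "rootp_subspace p W" and e: "e \<noteq> 0" and T: "T > 0"
    and orth: "\<And>u a. u \<in> W \<Longrightarrow> av (a ^ p * e) \<le> T * av (u + a ^ p * e)"
  shows "av_closure av (adjoin p W e) \<subseteq> adjoin p (av_closure av W) e"
proof
  fix x assume x: "x \<in> av_closure av (adjoin p W e)"
  have "\<exists>u a. u \<in> W \<and> av (x - (u + a ^ p * e)) < 1 / real (Suc j)" for j
    using x unfolding av_closure_def adjoin_def by (auto dest!: spec[of _ "1 / real (Suc j)"], blast)
  then obtain u a where u: "\<And>j. u j \<in> W"
    and close: "\<And>j. av (x - (u j + a j ^ p * e)) < 1 / real (Suc j)"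
    by metis
  have "T / av e > 0" using T av_pos[OF e] by simp
  then obtain L where L: "\<forall>\<epsilon>>0. \<exists>N. \<forall>n\<ge>N. av (a n - L) ^ p < \<epsilon>"
    using cauchy_limit_power_p[OF cplt _ approximation_coefficients_cauchy[OF W e T orth u close]]
    by blast
  have "x - L ^ p * e \<in> av_closure av W"
    unfolding av_closure_def
  proof (intro CollectI allI impI)
    fix \<epsilon> :: real assume "\<epsilon> > 0"
    then have "\<epsilon> / av e > 0" using av_pos[OF e] by simp
    then obtain N1 where N1: "\<forall>n\<ge>N1. av (a n - L) ^ p < \<epsilon> / av e" using L by blast
    obtain N2 where N2: "inverse (real (Suc N2)) < \<epsilon>" using reals_Archimedean[OF \<open>\<epsilon> > 0\<close>] by blast
    define j where "j = max N1 N2"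
    have "1 / real (Suc j) \<le> 1 / real (Suc N2)" unfolding j_def by (simp add: frac_le)
    then have "av (x - (u j + a j ^ p * e)) < \<epsilon>"
      using close[of j] N2 by (simp add: inverse_eq_divide)
    moreover have "av ((a j - L) ^ p * e) < \<epsilon>"
      using N1 av_pos[OF e] unfolding j_def by (simp add: av_mult av_power pos_less_divide_eq)
    moreover have "x - L ^ p * e - u j = (x - (u j + a j ^ p * e)) + (a j - L) ^ p * e"
      by (simp add: frobenius_diff algebra_simps)
    then have "av (x - L ^ p * e - u j) \<le> max (av (x - (u j + a j ^ p * e))) (av ((a j - L) ^ p * e))"
      by (simp only: av_add_le)
    ultimately have "av (x - L ^ p * e - u j) < \<epsilon>" by simp
    then show "\<exists>w\<in>W. av (x - L ^ p * e - w) < \<epsilon>" using u by blast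
  qed
  moreover have "x = (x - L ^ p * e) + L ^ p * e" by simp
  ultimately show "x \<in> adjoin p (av_closure av W) e" unfolding adjoin_def by blast
qed

lemma av_closure_adjoin_closed:
  fixes W :: "'k set"
  assumes "av_complete av" "rootp_subspace p W" "av_closure av W = W" "e \<noteq> 0" "T > 0"
    and "\<And>u a. u \<in> W \<Longrightarrow> av (a ^ p * e) \<le> T * av (u + a ^ p * e)"
  shows "av_closure av (adjoin p W e) = adjoin p W e"
proof (rule antisym)
  show "av_closure av (adjoin p W e) \<subseteq> adjoin p W e"
    using av_closure_adjoin_subset[OF assms(1,2,4,5,6)] unfolding assms(3) .
qed (rule subset_av_closure)

text \<open>A Riesz-type lemma: a point \<open>b\<close> outside a closed subspace \<open>W\<close> has a near-best
  approximation \<open>w\<close>, and then \<open>b - w\<close> is orthogonal to \<open>W\<close> up to any factor \<open>T > 1\<close>.\<close>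

lemma exists_almost_orthogonal_direction:
  fixes W :: "'k set"
  assumes W: "rootp_subspace p W" "av_closure av W = W" and b: "b \<notin> W" and T: "T > 1"
  shows "\<exists>w\<in>W. b - w \<noteq> 0 \<and> (\<forall>u\<in>W. \<forall>a. av (a ^ p * (b - w)) \<le> T * av (u + a ^ p * (b - w)))"
proof -
  define \<rho> where "\<rho> = Inf ((\<lambda>w. av (b - w)) ` W)"
  have W0: "0 \<in> W" by (rule rootp_subspaceD(1)[OF W(1)])
  have \<rho>_le: "\<rho> \<le> av (b - w)" if "w \<in> W" for w
    unfolding \<rho>_def using that by (intro cInf_lower) (auto intro: bdd_belowI[of _ 0])
  have \<rho>_less: "\<exists>w\<in>W. av (b - w) < v" if "\<rho> < v" for v
    using cInf_lessD[of "(\<lambda>w. av (b - w)) ` W" v] that W0 unfolding \<rho>_def by auto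
  have "\<rho> > 0"
  proof (rule ccontr)
    assume "\<not> \<rho> > 0"
    then have "b \<in> av_closure av W" unfolding av_closure_def using \<rho>_less by force
    then show False using b W(2) by simp
  qed
  then obtain w where w: "w \<in> W" "av (b - w) < T * \<rho>" using \<rho>_less[of "T * \<rho>"] T by auto
  have "b - w \<noteq> 0" using w(1) b by auto
  moreover have "av (a ^ p * (b - w)) \<le> T * av (u + a ^ p * (b - w))" if u: "u \<in> W" for u a
  proof (cases "a = 0")
    case True
    then show ?thesis using p_pos T by (simp add: power_0_left)
  next
    case False
    have "w - inverse a ^ p * u \<in> W"
      using rootp_subspace_diff[OF W(1) w(1) rootp_subspaceD(3)[OF W(1) u]] .
    then have "av a ^ p * \<rho> \<le> av a ^ p * av (b - (w - inverse a ^ p * u))"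
      by (simp add: \<rho>_le mult_left_mono)
    also have "a ^ p * inverse a ^ p = 1" using False by (simp add: power_mult_distrib[symmetric])
    then have "u + a ^ p * (b - w) = a ^ p * (b - (w - inverse a ^ p * u))"
      by (simp add: right_diff_distrib mult.assoc[symmetric])
    then have "av a ^ p * av (b - (w - inverse a ^ p * u)) = av (u + a ^ p * (b - w))"
      by (simp add: av_mult av_power)
    finally have "T * (av a ^ p * \<rho>) \<le> T * av (u + a ^ p * (b - w))" using T by simp
    moreover have "av a ^ p * av (b - w) \<le> av a ^ p * (T * \<rho>)"
      using mult_left_mono[OF less_imp_le[OF w(2)] zero_le_power[OF av_nonneg]] .
    then have "av (a ^ p * (b - w)) \<le> T * (av a ^ p * \<rho>)"
      by (simp add: av_mult av_power ac_simps)
    ultimately show ?thesis by linarith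
  qed
  ultimately show ?thesis using w(1) by blast
qed

lemma rootp_orthogonal_adjoin:
  fixes H :: "'k set"
  assumes orth: "rootp_orthogonal av p D H" and T: "T > 1"
    and e: "\<And>u a. u \<in> adjoin p H 1 \<Longrightarrow> av (a ^ p * e) \<le> T * av (u + a ^ p * e)"
  shows "rootp_orthogonal av p (D / T) (adjoin p H e)"
  unfolding rootp_orthogonal_def
proof (intro allI ballI)
  fix c x assume "x \<in> adjoin p H e"
  then obtain h s where h: "h \<in> H" and x: "x = h + s ^ p * e" unfolding adjoin_def by blast
  have u: "c ^ p + h \<in> adjoin p H 1" using h unfolding adjoin_one by blast
  have "av (c ^ p + h) \<le> max (av (c ^ p + x)) (av (s ^ p * e))"
    using av_diff_le[of "c ^ p + x" "s ^ p * e"] unfolding x by (simp add: add.assoc)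
  also have "\<dots> \<le> T * av (c ^ p + x)"
  proof (rule max.boundedI)
    show "av (c ^ p + x) \<le> T * av (c ^ p + x)"
      using mult_right_mono[of 1 T "av (c ^ p + x)"] T by simp
    show "av (s ^ p * e) \<le> T * av (c ^ p + x)" using e[OF u, of s] unfolding x by (simp add: add.assoc)
  qed
  finally have "D * av c ^ p \<le> T * av (c ^ p + x)"
    using orth h unfolding rootp_orthogonal_def by (meson order_trans)
  then show "D / T * av c ^ p \<le> av (c ^ p + x)" using T by (simp add: field_simps)
qed

lemma exists_orthogonal_extension:
  fixes H :: "'k set"
  assumes cplt: "av_complete av" and H: "rootp_subspace p H" "rootp_orthogonal av p D H"
    and closed: "av_closure av (adjoin p H 1) = adjoin p H 1"
    and b: "b \<notin> adjoin p H 1" and T: "T > 1"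
  shows "\<exists>H'. H \<subseteq> H' \<and> rootp_subspace p H' \<and> rootp_orthogonal av p (D / T) H' \<and>
           av_closure av (adjoin p H' 1) = adjoin p H' 1 \<and> b \<in> adjoin p H' 1"
proof -
  have W: "rootp_subspace p (adjoin p H 1)" by (rule rootp_subspace_adjoin[OF H(1)])
  obtain w where w: "w \<in> adjoin p H 1" "b - w \<noteq> 0"
    and e: "\<And>u a. u \<in> adjoin p H 1 \<Longrightarrow> av (a ^ p * (b - w)) \<le> T * av (u + a ^ p * (b - w))"
    using exists_almost_orthogonal_direction[OF W closed b T] by blast
  have comm: "adjoin p (adjoin p H (b - w)) 1 = adjoin p (adjoin p H 1) (b - w)"
    by (rule adjoin_adjoin_commute)
  have "av_closure av (adjoin p (adjoin p H (b - w)) 1) = adjoin p (adjoin p H (b - w)) 1"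
    unfolding comm using av_closure_adjoin_closed[OF cplt W closed w(2), of T] e T by simp
  moreover have "b \<in> adjoin p (adjoin p H (b - w)) 1"
  proof -
    have "b = w + 1 ^ p * (b - w)" by simp
    then show ?thesis using w(1) unfolding comm unfolding adjoin_def by blast
  qed
  ultimately show ?thesis
    using subset_adjoin rootp_subspace_adjoin[OF H(1)] rootp_orthogonal_adjoin[OF H(2) T e]
    by (intro exI[of _ "adjoin p H (b - w)"]) blast
qed

text \<open>The \<open>m\<close>-th extension costs a factor \<open>D\<^sub>m / D\<^sub>m\<^sub>+\<^sub>1\<close> of orthogonality; as the \<open>D\<^sub>m\<close> stay
  above \<open>1/2\<close>, so does the orthogonality constant of the union.\<close>

lemma exists_orthogonal_chain:
  fixes bs :: "nat \<Rightarrow> 'k"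
  assumes cplt: "av_complete av"
  shows "\<exists>Hs. \<forall>m. rootp_subspace p (Hs m) \<and> rootp_orthogonal av p (1 / 2) (Hs m) \<and>
                  Hs m \<subseteq> Hs (Suc m) \<and> bs m \<in> adjoin p (Hs (Suc m)) 1"
proof -
  define D :: "nat \<Rightarrow> real" where "D m = 1 / 2 + 1 / real (m + 2)" for m
  have D_half: "1 / 2 \<le> D m" and D_Suc: "D (Suc m) < D m" for m
    unfolding D_def by (simp_all add: frac_less2)
  have D_pos: "D m > 0" for m using D_half[of m] by linarith
  let ?P = "\<lambda>m H. rootp_subspace p H \<and> rootp_orthogonal av p (D m) H \<and>
                   av_closure av (adjoin p H 1) = adjoin p H 1"
  let ?Q = "\<lambda>m H H'. H \<subseteq> H' \<and> bs m \<in> adjoin p H' 1"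
  have "\<exists>Hs. \<forall>m. ?P m (Hs m) \<and> ?Q m (Hs m) (Hs (Suc m))"
  proof (rule dependent_nat_choice)
    have "rootp_subspace p {0::'k}" by (rule rootp_subspaceI) simp_all
    moreover have "rootp_orthogonal av p (D 0) {0::'k}"
      by (simp add: D_def rootp_orthogonal_def av_power)
    moreover have "av_closure av (adjoin p {0::'k} 1) = adjoin p {0} 1"
      using av_closure_adjoin_closed[OF cplt \<open>rootp_subspace p {0}\<close>, of 1 1] by (simp add: av_power)
    ultimately show "\<exists>H. ?P 0 H" by blast
  next
    fix H m assume P: "?P m H"
    show "\<exists>H'. ?P (Suc m) H' \<and> ?Q m H H'"
    proof (cases "bs m \<in> adjoin p H 1")
      case True
      then show ?thesis
        using P rootp_orthogonal_mono[OF less_imp_le[OF D_Suc]] by blast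
    next
      case False
      have "D m / D (Suc m) > 1" and "D m / (D m / D (Suc m)) = D (Suc m)"
        using D_Suc[of m] D_pos[of m] D_pos[of "Suc m"] by simp_all
      then show ?thesis
        using exists_orthogonal_extension[OF cplt _ _ _ False, of "D m" "D m / D (Suc m)"] P by auto
    qed
  qed
  then show ?thesis using rootp_orthogonal_mono[OF D_half] by meson
qed

lemma av_closure_mono: "A \<subseteq> B \<Longrightarrow> av_closure av A \<subseteq> av_closure av B"
  unfolding av_closure_def by blast

lemma av_closure_rootp_dense:
  assumes "rootp_dense av p V"
  shows "av_closure av V = UNIV"
proof (intro UNIV_eq_I[symmetric] CollectI allI impI, unfold av_closure_def mem_Collect_eq, intro allI impI)
  fix y and \<epsilon> :: real assume "\<epsilon> > 0"
  then have "\<epsilon> powr (1 / real p) > 0" by simp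
  then obtain v where v: "v \<in> V" "rootp_norm av p (y - v) < \<epsilon> powr (1 / real p)"
    using assms unfolding rootp_dense_def by blast
  have "av (y - v) < \<epsilon>"
  proof (rule ccontr)
    assume "\<not> av (y - v) < \<epsilon>"
    then have "\<epsilon> powr (1 / real p) \<le> av (y - v) powr (1 / real p)"
      using \<open>\<epsilon> > 0\<close> by (intro powr_mono2) auto
    then show False using v(2) unfolding rootp_norm_def by simp
  qed
  then show "\<exists>v\<in>V. av (y - v) < \<epsilon>" using v(1) by blast
qed

theorem frobenius_retraction_of_dense_countable_basis:
  assumes cplt: "av_complete av" and "rootp_dense_countable_basis av p"
  shows "\<exists>\<theta>. frobenius_retraction av p \<theta>"
proof -
  obtain V B where V: "rootp_dense av p V" and B: "countable B" "rootp_span p B = V"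
    using assms(2) unfolding rootp_dense_countable_basis_def by blast
  define bs where "bs = from_nat_into (insert 0 B)"
  have B_range: "B \<subseteq> range bs" using B(1) unfolding bs_def by auto
  obtain Hs where Hs: "\<And>m. rootp_subspace p (Hs m)" "\<And>m. rootp_orthogonal av p (1 / 2) (Hs m)"
    "\<And>m. Hs m \<subseteq> Hs (Suc m)" "\<And>m. bs m \<in> adjoin p (Hs (Suc m)) 1"
    using exists_orthogonal_chain[OF cplt, of bs] by blast
  define H where "H = (\<Union>m. Hs m)"
  have "subset.chain {H. rootp_subspace p H} (range Hs)"
    unfolding subset.chain_def using Hs(1) lift_Suc_mono_le[of Hs, OF Hs(3)] nat_le_linear by blast
  then have H: "rootp_subspace p H" unfolding H_def by (intro rootp_subspace_Union_chain) auto
  have orth: "rootp_orthogonal av p (1 / 2) H"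
    using Hs(2) unfolding H_def rootp_orthogonal_def by blast
  have "range bs \<subseteq> adjoin p H 1"
    using Hs(4) adjoin_mono[of "Hs (Suc _)" H] unfolding H_def by blast
  then have "V \<subseteq> adjoin p H 1"
    using rootp_subspace_sum[OF rootp_subspace_adjoin[OF H]] B_range B(2)
    unfolding rootp_span_def rootp_smult_def by blast
  then have "av_closure av (adjoin p H 1) = UNIV"
    using av_closure_mono av_closure_rootp_dense[OF V] by blast
  moreover have "av (a ^ p * 1) \<le> 2 * av (u + a ^ p * 1)" if "u \<in> H" for u a
  proof -
    have "1 / 2 * av a ^ p \<le> av (a ^ p + u)" using orth that unfolding rootp_orthogonal_def by blast
    then show ?thesis by (simp add: av_power add.commute)
  qed
  ultimately have "adjoin p (av_closure av H) 1 = UNIV"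
    using av_closure_adjoin_subset[OF cplt H one_neq_zero, of 2] by auto
  then show ?thesis
    using frobenius_retraction_of_complement[OF rootp_subspace_av_closure[OF H] _
        rootp_orthogonal_av_closure[OF orth]] by simp
qed

end

theorem corollaryD:
  fixes av :: "'k::field \<Rightarrow> real" and p n :: nat
  assumes "nonarch_abs av" and "av_complete av" and "nontrivial_value_group av"
    and "CHAR('k) = p" and "p > 0"
    and "n > 0"
    and "spherically_complete av
         \<or> rootp_dense_countable_basis av p
         \<or> (\<not> discrete_value_group av \<and> rootp_polar av p)"
  shows "frobenius_split (tate_algebra av n) p"
proof -
  interpret nonarch_field av p using assms(1,4,5) by unfold_locales
  obtain \<theta> where "frobenius_retraction av p \<theta>"
    using assms(7) frobenius_retraction_of_spherically_complete
      frobenius_retraction_of_dense_countable_basis[OF assms(2)]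
      frobenius_retraction_of_polar[OF assms(3)] by blast
  then show ?thesis by (rule frobenius_split_of_retraction)
qed

end
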